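(* Let $m^N_1$ be a smooth positive probability density on $(\mathbb{R}^d)^N$, let $m^k_1$ be its marginal density in $(v_1,\dots,v_k)$, let $\nu$ be a smooth positive probability density on $\mathbb{R}^d$, $m^k_2=\nu^{\otimes k}$, and $f_k=m^k_1/m^k_2$. Define $$I^k=\int m^k_2\frac{\|\nabla f_k\|^2}{f_k},\quad J^k=\int m^k_2\frac{\|\nabla^2f_k\|^2}{f_k},\quad K^k=\int m^k_2\frac{\|\nabla^3f_k\|^2}{f_k}\quad(\text{values in }[0,\infty]),$$ where $\nabla^j$ is the full $j$-th derivative in $(v_1,\dots,v_k)$. Then for all $1\le k\le N-1$, $$I^k\le I^{k+1},\qquad J^k\le J^{k+1},\qquad K^k\le K^{k+1}.$$
   Context: Norms of derivative tensors are Euclidean (Frobenius) norms. In the paper this is applied with $m^N_1=\mu^{N,N}_t$ (the particle law) and $\nu=\bar\mu_t$. *)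

theory Defs
  imports "HOL-Analysis.Analysis"
begin

text \<open>A configuration of n particles in R^d is an extensional function
  nat => real^'d on the index set {..<n} (particle i has position x i).
  Coordinates of (R^d)^n are indexed by pairs (i, a) with i < n, a :: 'd.\<close>

type_synonym ('d) cfg = "nat \<Rightarrow> real^'d"

definition conf :: "nat \<Rightarrow> ('d::finite) cfg set" where
  "conf n = PiE {..<n} (\<lambda>_. UNIV)"

definition dirs :: "nat \<Rightarrow> (nat \<times> 'd::finite) set" where
  "dirs n = {..<n} \<times> (UNIV :: 'd set)"

definition pdir :: "'d::finite cfg \<Rightarrow> nat \<times> 'd \<Rightarrow> real \<Rightarrow> 'd cfg" where
  "pdir x p t = x(fst p := x (fst p) + t *\<^sub>R axis (snd p) 1)"

definition partial :: "nat \<times> 'd::finite \<Rightarrow> ('d cfg \<Rightarrow> real) \<Rightarrow> 'd cfg \<Rightarrow> real" where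
  "partial p g x = deriv (\<lambda>t. g (pdir x p t)) 0"

fun iter_partial :: "(nat \<times> 'd::finite) list \<Rightarrow> ('d cfg \<Rightarrow> real) \<Rightarrow> 'd cfg \<Rightarrow> real" where
  "iter_partial [] g = g"
| "iter_partial (p # ps) g = partial p (iter_partial ps g)"

text \<open>C^infinity on (R^d)^n: all iterated partial derivatives exist (as genuine
  derivatives) and are continuous.\<close>
definition smooth_conf :: "nat \<Rightarrow> ('d::finite cfg \<Rightarrow> real) \<Rightarrow> bool" where
  "smooth_conf n g \<longleftrightarrow>
     (\<forall>ps. set ps \<subseteq> dirs n \<longrightarrow>
        continuous_on (conf n) (iter_partial ps g) \<and>
        (\<forall>p\<in>dirs n. \<forall>x\<in>conf n.
           ((\<lambda>t. iter_partial ps g (pdir x p t)) has_real_derivative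
              iter_partial (p # ps) g x) (at 0)))"

text \<open>Squared Euclidean (Frobenius) norm of the full j-th derivative tensor.\<close>
definition dnorm2 :: "nat \<Rightarrow> nat \<Rightarrow> ('d::finite cfg \<Rightarrow> real) \<Rightarrow> 'd cfg \<Rightarrow> real" where
  "dnorm2 n j g x =
     (\<Sum>ps\<in>{ps. set ps \<subseteq> dirs n \<and> length ps = j}. (iter_partial ps g x)\<^sup>2)"

definition lebPi :: "nat \<Rightarrow> 'd::finite cfg measure" where
  "lebPi n = PiM {..<n} (\<lambda>_. lborel)"

definition smooth_pos_density :: "nat \<Rightarrow> ('d::finite cfg \<Rightarrow> real) \<Rightarrow> bool" where
  "smooth_pos_density n m \<longleftrightarrow>
     m \<in> borel_measurable (lebPi n) \<and> (\<forall>x\<in>conf n. m x > 0) \<and>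
     smooth_conf n m \<and> (\<integral>\<^sup>+ x. ennreal (m x) \<partial>lebPi n) = 1"

text \<open>Smooth positive probability density on R^d (smoothness via the
  one-particle configuration space).\<close>
definition smooth_pos_density_Rd :: "(real^'d::finite \<Rightarrow> real) \<Rightarrow> bool" where
  "smooth_pos_density_Rd \<nu> \<longleftrightarrow>
     \<nu> \<in> borel_measurable lborel \<and> (\<forall>v. \<nu> v > 0) \<and>
     smooth_conf 1 (\<lambda>x. \<nu> (x 0)) \<and> (\<integral>\<^sup>+ v. ennreal (\<nu> v) \<partial>lborel) = 1"

definition marginal :: "nat \<Rightarrow> ('d::finite cfg \<Rightarrow> real) \<Rightarrow> nat \<Rightarrow> 'd cfg \<Rightarrow> real" where
  "marginal N m k x =
     (\<integral> y. m (merge {..<k} {k..<N} (x, y)) \<partial>PiM {k..<N} (\<lambda>_. lborel))"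

definition tensor_pow :: "(real^'d::finite \<Rightarrow> real) \<Rightarrow> nat \<Rightarrow> 'd cfg \<Rightarrow> real" where
  "tensor_pow \<nu> k x = (\<Prod>i<k. \<nu> (x i))"

definition ratio :: "nat \<Rightarrow> ('d::finite cfg \<Rightarrow> real) \<Rightarrow> (real^'d \<Rightarrow> real) \<Rightarrow> nat \<Rightarrow> 'd cfg \<Rightarrow> real" where
  "ratio N m \<nu> k x = marginal N m k x / tensor_pow \<nu> k x"

text \<open>info N m nu j k = integral of m_2^k |nabla^j f_k|^2 / f_k (j=1: I^k, 2: J^k, 3: K^k).\<close>
definition info :: "nat \<Rightarrow> ('d::finite cfg \<Rightarrow> real) \<Rightarrow> (real^'d \<Rightarrow> real) \<Rightarrow> nat \<Rightarrow> nat \<Rightarrow> ennreal" where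
  "info N m \<nu> j k =
     (\<integral>\<^sup>+ x. ennreal (tensor_pow \<nu> k x * dnorm2 k j (ratio N m \<nu> k) x / ratio N m \<nu> k x)
        \<partial>lebPi k)"

end

theory Submission
  imports Defs
begin

text \<open>Since \<open>2 w a - w\<^sup>2 b / t \<le> t a\<^sup>2 / b\<close> for \<open>t, b > 0\<close>, with equality at \<open>w = t a / b\<close>, the
  information at level \<open>k\<close> is the supremum over smooth compactly supported test functions \<open>w\<^sub>p\<^sub>s\<close>
  of \<open>\<Sum>\<^sub>p\<^sub>s \<integral> 2 w\<^sub>p\<^sub>s \<partial>\<^sup>p\<^sup>s f\<^sub>k - w\<^sub>p\<^sub>s\<^sup>2 f\<^sub>k / m\<^sub>2\<^sup>k\<close>. For test functions of the first \<open>k\<close> particles,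
  integration by parts and the identity \<open>f\<^sub>k(x) = \<integral> \<nu>(v) f\<^sub>k\<^sub>+\<^sub>1(x, v) dv\<close> turn this functional
  into the \<open>\<nu>\<close>-average over \<open>v\<close> of the same functional for the sections of \<open>f\<^sub>k\<^sub>+\<^sub>1\<close>, which is
  bounded pointwise by the level \<open>k + 1\<close> information integrand, restricted to derivatives in
  the first \<open>k\<close> particles. Taking \<open>w\<close> close to the optimiser, with cutoffs and a regularised
  denominator, and passing to the limit by monotone convergence gives the monotonicity.\<close>

section \<open>Coordinatewise smoothness on configuration space\<close>

lemma conf_iff: "x \<in> conf n \<longleftrightarrow> (\<forall>j\<ge>n. x j = undefined)"
  by (auto simp: conf_def PiE_def extensional_def)

lemma dirs_iff [simp]: "p \<in> dirs n \<longleftrightarrow> fst p < n"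
  by (cases p) (auto simp: dirs_def)

lemma finite_dir_lists: "finite {ps. set ps \<subseteq> dirs n \<and> length ps = j}"
  by (rule finite_lists_length_eq) (simp add: dirs_def)

lemma pdir_apply: "pdir x p t j = (if j = fst p then x j + t *\<^sub>R axis (snd p) 1 else x j)"
  by (simp add: pdir_def)

lemma pdir_in_conf: "x \<in> conf n \<Longrightarrow> p \<in> dirs n \<Longrightarrow> pdir x p t \<in> conf n"
  by (auto simp: conf_iff pdir_apply)

lemma pdir_0 [simp]: "pdir x p 0 = x"
  by (simp add: pdir_def)

lemma pdir_pdir [simp]: "pdir (pdir x p s) p t = pdir x p (s + t)"
  by (rule ext) (simp add: pdir_apply scaleR_add_left algebra_simps)

lemma pdir_fun_upd: "fst p \<noteq> k \<Longrightarrow> pdir (x(k := v)) p t = (pdir x p t)(k := v)"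
  by (auto simp: pdir_apply fun_eq_iff)

lemma fun_upd_in_conf_Suc: "x \<in> conf k \<Longrightarrow> x(k := v) \<in> conf (Suc k)"
  by (auto simp: conf_iff)

lemma continuous_on_pdir_param: "continuous_on S (\<lambda>t. pdir x p t)"
proof (intro continuous_on_coordinatewise_then_product)
  fix i show "continuous_on S (\<lambda>t. pdir x p t i)"
    unfolding pdir_apply by (cases "i = fst p") (auto intro!: continuous_intros)
qed

lemma continuous_on_pdir: "continuous_on S (\<lambda>x. pdir x p t)"
proof (intro continuous_on_coordinatewise_then_product)
  fix i
  have "continuous_on S (\<lambda>x. x j)" for j
    by (rule continuous_on_subset[OF continuous_on_product_coordinates]) simp
  then show "continuous_on S (\<lambda>x. pdir x p t i)"
    unfolding pdir_apply by (cases "i = fst p") (simp_all add: continuous_on_add continuous_on_const)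
qed

lemma continuous_on_compose_pdir:
  assumes "continuous_on (conf n) F" "p \<in> dirs n"
  shows "continuous_on (conf n) (\<lambda>x. F (pdir x p s))"
  by (rule continuous_on_compose2[OF assms(1) continuous_on_pdir]) (auto intro: pdir_in_conf assms(2))

lemma partial_eqI: "((\<lambda>t. g (pdir x p t)) has_real_derivative D) (at 0) \<Longrightarrow> partial p g x = D"
  by (simp add: partial_def DERIV_imp_deriv)

lemma iter_partial_append_single: "iter_partial (ps @ [p]) g = iter_partial ps (partial p g)"
  by (induction ps) auto

lemma iter_partial_cong:
  assumes "\<forall>y\<in>conf n. u y = v y" "set ps \<subseteq> dirs n" "x \<in> conf n"
  shows "iter_partial ps u x = iter_partial ps v x"
  using assms(2,3)
proof (induction ps arbitrary: x)
  case (Cons p ps)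
  then have "(\<lambda>t. iter_partial ps u (pdir x p t)) = (\<lambda>t. iter_partial ps v (pdir x p t))"
    by (auto intro!: Cons.IH pdir_in_conf)
  then show ?case by (simp add: partial_def)
qed (use assms(1) in simp)

lemma iter_partial_fun_upd:
  "set ps \<subseteq> dirs k \<Longrightarrow> iter_partial ps (\<lambda>x. g (x(k := v))) x = iter_partial ps g (x(k := v))"
proof (induction ps arbitrary: x)
  case (Cons p ps)
  then have "fst p \<noteq> k" "set ps \<subseteq> dirs k" by auto
  then have "(\<lambda>t. iter_partial ps (\<lambda>x. g (x(k := v))) (pdir x p t)) =
      (\<lambda>t. iter_partial ps g (pdir (x(k := v)) p t))"
    by (simp only: Cons.IH pdir_fun_upd[OF \<open>fst p \<noteq> k\<close>])
  then show ?case by (simp only: iter_partial.simps partial_def)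
qed simp

text \<open>The index counts the iterated partial derivatives that must be differentiable once more:
  \<open>smooth_upto 0 n g\<close> means that \<open>g\<close> is continuous and has all partial derivatives.\<close>

definition smooth_upto :: "nat \<Rightarrow> nat \<Rightarrow> ('d::finite cfg \<Rightarrow> real) \<Rightarrow> bool" where
  "smooth_upto r n g \<longleftrightarrow> (\<forall>ps. set ps \<subseteq> dirs n \<longrightarrow> length ps \<le> r \<longrightarrow>
     continuous_on (conf n) (iter_partial ps g) \<and>
     (\<forall>p\<in>dirs n. \<forall>x\<in>conf n.
        ((\<lambda>t. iter_partial ps g (pdir x p t)) has_real_derivative iter_partial (p # ps) g x) (at 0)))"

lemma smooth_conf_iff_smooth_upto: "smooth_conf n g \<longleftrightarrow> (\<forall>r. smooth_upto r n g)"
  unfolding smooth_conf_def smooth_upto_def by (meson order_refl)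

lemma smooth_upto_mono: "smooth_upto r n g \<Longrightarrow> r' \<le> r \<Longrightarrow> smooth_upto r' n g"
  unfolding smooth_upto_def by auto

lemma smooth_upto_0_iff: "smooth_upto 0 n g \<longleftrightarrow> continuous_on (conf n) g \<and>
   (\<forall>p\<in>dirs n. \<forall>x\<in>conf n. ((\<lambda>t. g (pdir x p t)) has_real_derivative partial p g x) (at 0))"
  unfolding smooth_upto_def by auto

lemma smooth_upto_0I:
  assumes "continuous_on (conf n) g"
    and "\<And>p x. p \<in> dirs n \<Longrightarrow> x \<in> conf n \<Longrightarrow> \<exists>D. ((\<lambda>t. g (pdir x p t)) has_real_derivative D) (at 0)"
  shows "smooth_upto 0 n g"
  unfolding smooth_upto_0_iff partial_def using assms DERIV_imp_deriv by metis

lemma smooth_upto_Suc_iff: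
  fixes g :: "'d::finite cfg \<Rightarrow> real"
  shows "smooth_upto (Suc r) n g \<longleftrightarrow> smooth_upto 0 n g \<and> (\<forall>p\<in>dirs n. smooth_upto r n (partial p g))"
proof -
  have lists: "(\<forall>ps. set ps \<subseteq> dirs n \<longrightarrow> length ps \<le> Suc r \<longrightarrow> P ps) \<longleftrightarrow>
      P [] \<and> (\<forall>p\<in>dirs n. \<forall>qs. set qs \<subseteq> dirs n \<longrightarrow> length qs \<le> r \<longrightarrow> P (qs @ [p]))"
    for P :: "(nat \<times> 'd) list \<Rightarrow> bool"
  proof safe
    fix ps :: "(nat \<times> 'd) list" assume "P []" "\<forall>p\<in>dirs n. \<forall>qs. set qs \<subseteq> dirs n \<longrightarrow> length qs \<le> r \<longrightarrow> P (qs @ [p])"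
      "set ps \<subseteq> dirs n" "length ps \<le> Suc r"
    then show "P ps" by (cases ps rule: rev_cases) auto
  qed auto
  show ?thesis
    unfolding smooth_upto_def lists by (simp add: iter_partial_append_single)
qed

lemma smooth_upto_imp_continuous_on: "smooth_upto r n g \<Longrightarrow> continuous_on (conf n) g"
  using smooth_upto_mono smooth_upto_0_iff by blast

lemma smooth_upto_has_partial:
  "smooth_upto r n g \<Longrightarrow> p \<in> dirs n \<Longrightarrow> x \<in> conf n \<Longrightarrow>
     ((\<lambda>t. g (pdir x p t)) has_real_derivative partial p g x) (at 0)"
  using smooth_upto_mono smooth_upto_0_iff by blast

lemma smooth_upto_has_partial_at:
  assumes "smooth_upto r n g" "x \<in> conf n" "p \<in> dirs n"
  shows "((\<lambda>t. g (pdir x p t)) has_real_derivative partial p g (pdir x p s)) (at s)"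
proof -
  have "((\<lambda>t. g (pdir x p (t + s))) has_real_derivative partial p g (pdir x p s)) (at 0)"
    using smooth_upto_has_partial[OF assms(1,3) pdir_in_conf[OF assms(2,3)], of s] by (simp add: add.commute)
  then show ?thesis using DERIV_shift[of "\<lambda>t. g (pdir x p t)" _ 0 s] by simp
qed

lemma smooth_upto_partial: "smooth_upto (Suc r) n g \<Longrightarrow> p \<in> dirs n \<Longrightarrow> smooth_upto r n (partial p g)"
  using smooth_upto_Suc_iff by blast

lemma smooth_upto_iter_partial:
  "smooth_upto (r + length ps) n g \<Longrightarrow> set ps \<subseteq> dirs n \<Longrightarrow> smooth_upto r n (iter_partial ps g)"
proof (induction ps arbitrary: r)
  case (Cons p ps)
  then have "smooth_upto (Suc r) n (iter_partial ps g)" using Cons.IH[of "Suc r"] by simp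
  with Cons.prems show ?case by (simp add: smooth_upto_partial)
qed simp

lemma continuous_on_iter_partial:
  "smooth_upto r n g \<Longrightarrow> set ps \<subseteq> dirs n \<Longrightarrow> length ps \<le> r \<Longrightarrow>
     continuous_on (conf n) (iter_partial ps g)"
  unfolding smooth_upto_def by blast

lemma smooth_upto_cong:
  fixes g :: "'d::finite cfg \<Rightarrow> real"
  assumes "smooth_upto r n g" "\<forall>x\<in>conf n. g x = g' x"
  shows "smooth_upto r n g'"
proof -
  have eq: "iter_partial qs g y = iter_partial qs g' y" if "set qs \<subseteq> dirs n" "y \<in> conf n" for qs y
    using iter_partial_cong assms(2) that by blast
  show ?thesis
    unfolding smooth_upto_def
  proof (intro allI impI conjI ballI)
    fix ps :: "(nat \<times> 'd) list" assume ps: "set ps \<subseteq> dirs n" "length ps \<le> r"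
    show "continuous_on (conf n) (iter_partial ps g')"
      using continuous_on_iter_partial[OF assms(1) ps] eq ps continuous_on_cong by fastforce
    fix p :: "nat \<times> 'd" and x :: "'d cfg" assume px: "p \<in> dirs n" "x \<in> conf n"
    have "(\<lambda>t. iter_partial ps g (pdir x p t)) = (\<lambda>t. iter_partial ps g' (pdir x p t))"
      using eq ps px pdir_in_conf by blast
    moreover have "iter_partial (p # ps) g x = iter_partial (p # ps) g' x"
      using eq[of "p # ps" x] ps px by simp
    ultimately show "((\<lambda>t. iter_partial ps g' (pdir x p t)) has_real_derivative iter_partial (p # ps) g' x) (at 0)"
      using assms(1) ps px unfolding smooth_upto_def by metis
  qed
qed

lemma smooth_upto_SucI:
  assumes "smooth_upto 0 n g"
    and "\<And>p. p \<in> dirs n \<Longrightarrow> \<exists>h. smooth_upto r n h \<and> (\<forall>x\<in>conf n. h x = partial p g x)"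
  shows "smooth_upto (Suc r) n g"
  using assms smooth_upto_cong unfolding smooth_upto_Suc_iff by metis

lemma smooth_upto_const: "smooth_upto r n (\<lambda>_. c)"
proof (induction r arbitrary: c)
  case 0 show ?case by (auto intro!: smooth_upto_0I exI[of _ 0])
next
  case (Suc r)
  have "partial p (\<lambda>_. c) x = 0" for p x by (rule partial_eqI) simp
  with Suc.IH[of 0] show ?case
    by (intro smooth_upto_SucI) (auto intro!: smooth_upto_0I exI[of _ 0] exI[of _ "\<lambda>_. 0"])
qed

lemma smooth_upto_add:
  fixes f g :: "'d::finite cfg \<Rightarrow> real"
  shows "smooth_upto r n f \<Longrightarrow> smooth_upto r n g \<Longrightarrow> smooth_upto r n (\<lambda>x. f x + g x)"
proof (induction r arbitrary: f g)
  case 0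
  show ?case
  proof (rule smooth_upto_0I)
    show "continuous_on (conf n) (\<lambda>x. f x + g x)"
      using 0 by (intro continuous_intros smooth_upto_imp_continuous_on)
    fix p :: "nat \<times> 'd" and x :: "'d cfg" assume "p \<in> dirs n" "x \<in> conf n"
    with 0 show "\<exists>D. ((\<lambda>t. f (pdir x p t) + g (pdir x p t)) has_real_derivative D) (at 0)"
      using DERIV_add[OF smooth_upto_has_partial[OF 0(1)] smooth_upto_has_partial[OF 0(2)]] by blast
  qed
next
  case (Suc r)
  show ?case
  proof (rule smooth_upto_SucI)
    show "smooth_upto 0 n (\<lambda>x. f x + g x)"
      using Suc.IH[OF smooth_upto_mono[OF Suc.prems(1)] smooth_upto_mono[OF Suc.prems(2)]]
      by (auto intro: smooth_upto_mono)
    fix p :: "nat \<times> 'd" assume p: "p \<in> dirs n"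
    have "partial p (\<lambda>x. f x + g x) x = partial p f x + partial p g x" if "x \<in> conf n" for x
      using Suc.prems p that by (intro partial_eqI DERIV_add smooth_upto_has_partial)
    then show "\<exists>h. smooth_upto r n h \<and> (\<forall>x\<in>conf n. h x = partial p (\<lambda>x. f x + g x) x)"
      using Suc.IH[OF smooth_upto_partial[OF Suc.prems(1) p] smooth_upto_partial[OF Suc.prems(2) p]]
      by auto
  qed
qed

lemma smooth_upto_mult:
  fixes f g :: "'d::finite cfg \<Rightarrow> real"
  shows "smooth_upto r n f \<Longrightarrow> smooth_upto r n g \<Longrightarrow> smooth_upto r n (\<lambda>x. f x * g x)"
proof (induction r arbitrary: f g)
  case 0
  show ?case
  proof (rule smooth_upto_0I)
    show "continuous_on (conf n) (\<lambda>x. f x * g x)"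
      using 0 by (intro continuous_intros smooth_upto_imp_continuous_on)
    fix p :: "nat \<times> 'd" and x :: "'d cfg" assume "p \<in> dirs n" "x \<in> conf n"
    with 0 show "\<exists>D. ((\<lambda>t. f (pdir x p t) * g (pdir x p t)) has_real_derivative D) (at 0)"
      using DERIV_mult[OF smooth_upto_has_partial[OF 0(1)] smooth_upto_has_partial[OF 0(2)]] by blast
  qed
next
  case (Suc r)
  show ?case
  proof (rule smooth_upto_SucI)
    show "smooth_upto 0 n (\<lambda>x. f x * g x)"
      using Suc.IH[OF smooth_upto_mono[OF Suc.prems(1)] smooth_upto_mono[OF Suc.prems(2)]]
      by (auto intro: smooth_upto_mono)
    fix p :: "nat \<times> 'd" assume p: "p \<in> dirs n"
    have "partial p (\<lambda>x. f x * g x) x = partial p f x * g x + partial p g x * f x" if "x \<in> conf n" for x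
      using DERIV_mult[OF smooth_upto_has_partial[OF Suc.prems(1) p that]
          smooth_upto_has_partial[OF Suc.prems(2) p that]]
      by (intro partial_eqI) simp
    moreover have "smooth_upto r n (\<lambda>x. partial p f x * g x + partial p g x * f x)"
      using Suc.prems p
      by (intro smooth_upto_add Suc.IH) (auto intro: smooth_upto_partial smooth_upto_mono)
    ultimately show "\<exists>h. smooth_upto r n h \<and> (\<forall>x\<in>conf n. h x = partial p (\<lambda>x. f x * g x) x)"
      by auto
  qed
qed

lemma smooth_upto_sum: "(\<And>i. i \<in> I \<Longrightarrow> smooth_upto r n (f i)) \<Longrightarrow> smooth_upto r n (\<lambda>x. \<Sum>i\<in>I. f i x)"
  by (induction I rule: infinite_finite_induct) (simp_all add: smooth_upto_const smooth_upto_add)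

lemma smooth_upto_prod: "(\<And>i. i \<in> I \<Longrightarrow> smooth_upto r n (f i)) \<Longrightarrow> smooth_upto r n (\<lambda>x. \<Prod>i\<in>I. f i x)"
  by (induction I rule: infinite_finite_induct) (simp_all add: smooth_upto_const smooth_upto_mult)

primrec real_smooth_upto :: "nat \<Rightarrow> (real \<Rightarrow> real) \<Rightarrow> real set \<Rightarrow> bool" where
  "real_smooth_upto 0 h U \<longleftrightarrow>
     continuous_on U h \<and> (\<exists>h'. \<forall>y\<in>U. (h has_real_derivative h' y) (at y))"
| "real_smooth_upto (Suc r) h U \<longleftrightarrow>
     continuous_on U h \<and> (\<exists>h'. (\<forall>y\<in>U. (h has_real_derivative h' y) (at y)) \<and> real_smooth_upto r h' U)"

lemma smooth_upto_compose:
  fixes f :: "'d::finite cfg \<Rightarrow> real"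
  assumes "real_smooth_upto r h U" "smooth_upto r n f" "\<forall>x\<in>conf n. f x \<in> U"
  shows "smooth_upto r n (\<lambda>x. h (f x))"
  using assms(1,2)
proof (induction r arbitrary: h)
  have base: "smooth_upto 0 n (\<lambda>x. h (f x))" and
    partial_comp: "\<And>p x. p \<in> dirs n \<Longrightarrow> x \<in> conf n \<Longrightarrow> partial p (\<lambda>x. h (f x)) x = h' (f x) * partial p f x"
    if h: "continuous_on U h" "\<forall>y\<in>U. (h has_real_derivative h' y) (at y)" and f: "smooth_upto 0 n f"
    for h h'
  proof -
    have chain: "((\<lambda>t. h (f (pdir x p t))) has_real_derivative h' (f x) * partial p f x) (at 0)"
      if "p \<in> dirs n" "x \<in> conf n" for p x
    proof -
      have "(h has_real_derivative h' (f (pdir x p 0))) (at (f (pdir x p 0)))"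
        using h(2) assms(3) that by simp
      from DERIV_chain2[OF this smooth_upto_has_partial[OF f that]] show ?thesis by simp
    qed
    show "smooth_upto 0 n (\<lambda>x. h (f x))"
      using continuous_on_compose2[OF h(1) smooth_upto_imp_continuous_on[OF f]] assms(3) chain
      by (intro smooth_upto_0I) (auto, blast)
    show "partial p (\<lambda>x. h (f x)) x = h' (f x) * partial p f x" if "p \<in> dirs n" "x \<in> conf n" for p x
      using chain[OF that] by (rule partial_eqI)
  qed
  {
    case 0
    then show ?case using base by auto
  next
    case (Suc r)
    then obtain h' where h': "continuous_on U h" "\<forall>y\<in>U. (h has_real_derivative h' y) (at y)"
      "real_smooth_upto r h' U" by auto
    have f0: "smooth_upto 0 n f" using Suc.prems(2) smooth_upto_mono by blast
    show ?case
    proof (rule smooth_upto_SucI)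
      show "smooth_upto 0 n (\<lambda>x. h (f x))" using base[OF h'(1,2) f0] .
      fix p :: "nat \<times> 'd" assume p: "p \<in> dirs n"
      have "smooth_upto r n (\<lambda>x. h' (f x) * partial p f x)"
        using Suc.IH[OF h'(3) smooth_upto_mono[OF Suc.prems(2)]] smooth_upto_partial[OF Suc.prems(2) p]
        by (intro smooth_upto_mult) auto
      then show "\<exists>g. smooth_upto r n g \<and> (\<forall>x\<in>conf n. g x = partial p (\<lambda>x. h (f x)) x)"
        using partial_comp[OF h'(1,2) f0 p] by auto
    qed
  }
qed

lemma smooth_upto_compose_map:
  fixes \<Phi> :: "'d::finite cfg \<Rightarrow> 'd cfg"
  assumes "\<forall>x\<in>conf n. \<Phi> x \<in> conf m" "continuous_on (conf n) \<Phi>"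
    and lines: "\<forall>p\<in>dirs n. (\<exists>q\<in>dirs m. \<forall>x\<in>conf n. \<forall>t. \<Phi> (pdir x p t) = pdir (\<Phi> x) q t) \<or>
                (\<forall>x\<in>conf n. \<forall>t. \<Phi> (pdir x p t) = \<Phi> x)"
    and "smooth_upto r m g"
  shows "smooth_upto r n (\<lambda>x. g (\<Phi> x))"
  using assms(4)
proof (induction r arbitrary: g)
  have partial_comp: "\<exists>h. (h = (\<lambda>_. 0) \<or> (\<exists>q\<in>dirs m. h = (\<lambda>x. partial q g (\<Phi> x)))) \<and>
      (\<forall>x\<in>conf n. ((\<lambda>t. g (\<Phi> (pdir x p t))) has_real_derivative h x) (at 0))"
    if g: "smooth_upto 0 m g" and p: "p \<in> dirs n" for g p
  proof (cases "\<exists>q\<in>dirs m. \<forall>x\<in>conf n. \<forall>t. \<Phi> (pdir x p t) = pdir (\<Phi> x) q t")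
    case True
    then obtain q where q: "q \<in> dirs m" "\<forall>x\<in>conf n. \<forall>t. \<Phi> (pdir x p t) = pdir (\<Phi> x) q t" by blast
    then show ?thesis
      using smooth_upto_has_partial[OF g q(1)] assms(1)
      by (intro exI[of _ "\<lambda>x. partial q g (\<Phi> x)"]) auto
  next
    case False
    then have "\<forall>x\<in>conf n. \<forall>t. \<Phi> (pdir x p t) = \<Phi> x" using lines p by blast
    then show ?thesis by (intro exI[of _ "\<lambda>_. 0"]) simp
  qed
  have base: "smooth_upto 0 n (\<lambda>x. g (\<Phi> x))" if g: "smooth_upto 0 m g" for g
  proof (rule smooth_upto_0I)
    show "continuous_on (conf n) (\<lambda>x. g (\<Phi> x))"
      using assms(1) by (intro continuous_on_compose2[OF smooth_upto_imp_continuous_on[OF g] assms(2)]) blast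
    fix p :: "nat \<times> 'd" and x :: "'d cfg" assume "p \<in> dirs n" "x \<in> conf n"
    then show "\<exists>D. ((\<lambda>t. g (\<Phi> (pdir x p t))) has_real_derivative D) (at 0)"
      using partial_comp[OF g] by blast
  qed
  {
    case 0
    then show ?case by (rule base)
  next
    case (Suc r)
    show ?case
    proof (rule smooth_upto_SucI)
      show "smooth_upto 0 n (\<lambda>x. g (\<Phi> x))" using base Suc.prems smooth_upto_mono by blast
      fix p :: "nat \<times> 'd" assume p: "p \<in> dirs n"
      obtain h where h: "h = (\<lambda>_. 0) \<or> (\<exists>q\<in>dirs m. h = (\<lambda>x. partial q g (\<Phi> x)))"
        "\<forall>x\<in>conf n. ((\<lambda>t. g (\<Phi> (pdir x p t))) has_real_derivative h x) (at 0)"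
        using partial_comp[OF smooth_upto_mono[OF Suc.prems] p] by auto
      have "smooth_upto r n h"
        using h(1) Suc.IH smooth_upto_partial[OF Suc.prems] smooth_upto_const by auto
      moreover have "\<forall>x\<in>conf n. h x = partial p (\<lambda>x. g (\<Phi> x)) x"
        using h(2) DERIV_imp_deriv unfolding partial_def by fastforce
      ultimately show "\<exists>h. smooth_upto r n h \<and> (\<forall>x\<in>conf n. h x = partial p (\<lambda>x. g (\<Phi> x)) x)"
        by blast
    qed
  }
qed

lemma smooth_upto_fun_upd:
  fixes g :: "'d::finite cfg \<Rightarrow> real"
  assumes "smooth_upto r (Suc k) g"
  shows "smooth_upto r k (\<lambda>x. g (x(k := v)))"
proof (rule smooth_upto_compose_map[OF _ _ _ assms])
  show "continuous_on (conf k) (\<lambda>x::'d cfg. x(k := v))"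
  proof (intro continuous_on_coordinatewise_then_product)
    fix j :: nat
    show "continuous_on (conf k) (\<lambda>x::'d cfg. (x(k := v)) j)"
      by (cases "j = k") (simp_all add: continuous_on_subset[OF continuous_on_product_coordinates])
  qed
  show "\<forall>p\<in>dirs k. (\<exists>q\<in>dirs (Suc k). \<forall>x\<in>conf k. \<forall>t. (pdir x p t)(k := v) = pdir (x(k := v)) q t) \<or>
      (\<forall>x\<in>conf k. \<forall>t. (pdir x p t)(k := v) = x(k := v))"
  proof (intro ballI disjI1)
    fix p :: "nat \<times> 'd" assume "p \<in> dirs k"
    then show "\<exists>q\<in>dirs (Suc k). \<forall>x\<in>conf k. \<forall>t. (pdir x p t)(k := v) = pdir (x(k := v)) q t"
      by (intro bexI[of _ p]) (auto simp: pdir_fun_upd)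
  qed
qed (use fun_upd_in_conf_Suc in blast)

lemma smooth_upto_particle:
  fixes g :: "real^'d::finite \<Rightarrow> real"
  assumes "smooth_conf 1 (\<lambda>y::'d cfg. g (y 0))" "i < n"
  shows "smooth_upto r n (\<lambda>x::'d cfg. g (x i))"
proof -
  define E where "E x = (\<lambda>j::nat. if j = 0 then x i else undefined)" for x :: "'d cfg"
  have "smooth_upto r n (\<lambda>x. (\<lambda>y::'d cfg. g (y 0)) (E x))"
  proof (rule smooth_upto_compose_map)
    show "\<forall>x\<in>conf n. E x \<in> conf 1" by (auto simp: E_def conf_iff)
    show "continuous_on (conf n) E" unfolding E_def
    proof (intro continuous_on_coordinatewise_then_product)
      fix j :: nat
      show "continuous_on (conf n) (\<lambda>x::'d cfg. if j = 0 then x i else undefined)"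
        by (cases "j = 0") (simp_all add: continuous_on_subset[OF continuous_on_product_coordinates])
    qed
    show "\<forall>p\<in>dirs n. (\<exists>q\<in>dirs 1. \<forall>x\<in>conf n. \<forall>t. E (pdir x p t) = pdir (E x) q t) \<or>
        (\<forall>x\<in>conf n. \<forall>t. E (pdir x p t) = E x)"
    proof
      fix p :: "nat \<times> 'd"
      show "(\<exists>q\<in>dirs 1. \<forall>x\<in>conf n. \<forall>t. E (pdir x p t) = pdir (E x) q t) \<or>
          (\<forall>x\<in>conf n. \<forall>t. E (pdir x p t) = E x)"
      proof (cases "fst p = i")
        case True
        then have "\<forall>x\<in>conf n. \<forall>t. E (pdir x p t) = pdir (E x) (0, snd p) t"
          by (auto simp: E_def pdir_apply fun_eq_iff)
        then show ?thesis by (intro disjI1 bexI[of _ "(0, snd p)"]) auto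
      qed (auto simp: E_def pdir_apply fun_eq_iff)
    qed
    show "smooth_upto r 1 (\<lambda>y::'d cfg. g (y 0))" using assms(1) smooth_conf_iff_smooth_upto by blast
  qed
  then show ?thesis by (simp add: E_def)
qed

lemma smooth_upto_tensor_pow:
  assumes "smooth_conf 1 (\<lambda>y::'d::finite cfg. \<nu> (y 0))"
  shows "smooth_upto r n (tensor_pow \<nu> n :: 'd cfg \<Rightarrow> real)"
  unfolding tensor_pow_def by (intro smooth_upto_prod smooth_upto_particle[OF assms]) simp

lemma smooth_upto_affine:
  fixes g :: "'d::finite cfg \<Rightarrow> real"
  assumes "continuous_on (conf n) g" "\<forall>x\<in>conf n. \<forall>p\<in>dirs n. \<forall>t. g (pdir x p t) = g x + t * c p"
  shows "smooth_upto r n g"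
proof -
  have lin: "((\<lambda>t. a + t * b) has_real_derivative b) (at 0)" for a b :: real
    by (auto intro!: derivative_eq_intros)
  have g0: "smooth_upto 0 n g"
  proof (rule smooth_upto_0I[OF assms(1)])
    fix p :: "nat \<times> 'd" and x :: "'d cfg" assume "p \<in> dirs n" "x \<in> conf n"
    then have "((\<lambda>t. g (pdir x p t)) has_real_derivative c p) (at 0)" using assms(2) lin by auto
    then show "\<exists>D. ((\<lambda>t. g (pdir x p t)) has_real_derivative D) (at 0)" by blast
  qed
  have "\<forall>x\<in>conf n. c p = partial p g x" if "p \<in> dirs n" for p
    using assms that lin by (auto intro!: partial_eqI[symmetric])
  then have "\<exists>h. smooth_upto r' n h \<and> (\<forall>x\<in>conf n. h x = partial p g x)" if "p \<in> dirs n" for p r'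
    using that smooth_upto_const by (intro exI[of _ "\<lambda>_. c p"]) auto
  with g0 show ?thesis
    by (cases r) (auto intro!: smooth_upto_SucI)
qed

lemma smooth_upto_coordinate:
  assumes "i < n"
  shows "smooth_upto r n (\<lambda>x::'d::finite cfg. x i $ a)"
proof (rule smooth_upto_affine[where c = "\<lambda>p. if p = (i, a) then 1 else 0"])
  show "continuous_on (conf n) (\<lambda>x::'d cfg. x i $ a)"
    by (intro continuous_intros continuous_on_product_then_coordinatewise continuous_on_id)
  show "\<forall>x\<in>conf n. \<forall>p\<in>dirs n. \<forall>t. pdir x p t i $ a = x i $ a + t * (if p = (i, a) then 1 else 0)"
    by (auto simp: pdir_apply axis_def)
qed

section \<open>Smooth functions of one variable and cutoffs\<close>

lemma has_real_derivative_power_int_shift: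
  assumes "y + e \<noteq> 0"
  shows "((\<lambda>y. c * (y + e) powi k) has_real_derivative c * of_int k * (y + e) powi (k - 1)) (at y)"
  using assms by (auto intro!: derivative_eq_intros)

lemma real_smooth_upto_power_int_shift: "real_smooth_upto r (\<lambda>y. c * (y + e) powi k) {y. - e < y}"
proof (induction r arbitrary: c k)
  case 0
  show ?case
    by (auto intro!: continuous_intros exI[of _ "\<lambda>y. c * of_int k * (y + e) powi (k - 1)"]
        has_real_derivative_power_int_shift)
next
  case (Suc r)
  show ?case
    by (auto intro!: continuous_intros exI[of _ "\<lambda>y. c * of_int k * (y + e) powi (k - 1)"]
        has_real_derivative_power_int_shift Suc.IH)
qed

text \<open>A polynomial profile suffices: only finitely many derivatives of a test function are used.\<close>

definition cutoff_profile :: "nat \<Rightarrow> real \<Rightarrow> real" where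
  "cutoff_profile m s = (max 0 (1 - s)) ^ m"

lemma continuous_on_cutoff_profile: "continuous_on U (cutoff_profile m)"
  unfolding cutoff_profile_def by (intro continuous_intros)

lemma has_real_derivative_cutoff_profile:
  assumes m: "2 \<le> m"
  shows "(cutoff_profile m has_real_derivative (- real m * cutoff_profile (m - 1) s)) (at s)"
proof -
  consider "s < 1" | "s > 1" | "s = 1" by linarith
  then show ?thesis
  proof cases
    case 1
    have "((\<lambda>s. (1 - s) ^ m) has_real_derivative (- real m * (1 - s) ^ (m - 1))) (at s)"
      by (auto intro!: derivative_eq_intros)
    then have "((\<lambda>s. (1 - s) ^ m) has_real_derivative (- real m * cutoff_profile (m - 1) s)) (at s)"
      using 1 by (simp add: cutoff_profile_def)
    then show ?thesis
      by (rule has_field_derivative_transform_within_open[where S = "{..<1}"]) (use 1 in \<open>auto simp: cutoff_profile_def\<close>)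
  next
    case 2
    have "cutoff_profile (m - 1) s = 0" using 2 m by (simp add: cutoff_profile_def power_0_left)
    then have "((\<lambda>s. 0) has_real_derivative (- real m * cutoff_profile (m - 1) s)) (at s)"
      by simp
    then show ?thesis
      by (rule has_field_derivative_transform_within_open[where S = "{1<..}"]) (use 2 m in \<open>auto simp: cutoff_profile_def\<close>)
  next
    case 3
    have "(cutoff_profile m has_real_derivative 0) (at 1)"
      unfolding DERIV_def
    proof (rule Lim_null_comparison)
      have "\<bar>max 0 (- h) ^ m / h\<bar> \<le> \<bar>h\<bar> ^ (m - 1)" for h :: real
      proof -
        have "max 0 (- h) ^ m \<le> \<bar>h\<bar> ^ (m - 1) * \<bar>h\<bar>"
          using m power_mono[of "max 0 (- h)" "\<bar>h\<bar>" m] by (simp add: power_Suc2[symmetric])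
        then show ?thesis by (cases "h = 0") (auto simp: abs_divide divide_le_eq)
      qed
      then show "\<forall>\<^sub>F h in at 0. norm ((cutoff_profile m (1 + h) - cutoff_profile m 1) / h) \<le> \<bar>h\<bar> ^ (m - 1)"
        using m by (simp add: cutoff_profile_def abs_divide power_0_left)
      show "((\<lambda>h. \<bar>h\<bar> ^ (m - 1)) \<longlongrightarrow> 0) (at (0::real))"
        using m by (auto intro!: tendsto_eq_intros)
    qed
    moreover have "cutoff_profile (m - 1) 1 = 0" using m by (simp add: cutoff_profile_def)
    ultimately show ?thesis using 3 by simp
  qed
qed

lemma real_smooth_upto_cutoff_profile:
  assumes "r + 2 \<le> m"
  shows "real_smooth_upto r (\<lambda>s. c * cutoff_profile m s) UNIV"
  using assms
proof (induction r arbitrary: c m)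
  case 0
  show ?case using has_real_derivative_cutoff_profile[of m] 0
    by (auto intro!: continuous_intros continuous_on_cutoff_profile exI[of _ "\<lambda>s. c * (- real m * cutoff_profile (m - 1) s)"] DERIV_cmult)
next
  case (Suc r)
  have d: "((\<lambda>s. c * cutoff_profile m s) has_real_derivative (c * - real m) * cutoff_profile (m - 1) s) (at s)" for s
    using DERIV_cmult[OF has_real_derivative_cutoff_profile[of m s], of c] Suc.prems by (simp add: mult.assoc)
  have "real_smooth_upto r (\<lambda>s. (c * - real m) * cutoff_profile (m - 1) s) UNIV" by (rule Suc.IH) (use Suc.prems in simp)
  moreover have "continuous_on UNIV (\<lambda>s. c * cutoff_profile m s)" by (intro continuous_intros continuous_on_cutoff_profile)
  ultimately show ?case unfolding real_smooth_upto.simps using d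
    by (intro conjI exI[of _ "\<lambda>s. (c * - real m) * cutoff_profile (m - 1) s"]) auto
qed

lemma cutoff_profile_bounds: "0 \<le> s \<Longrightarrow> 0 \<le> cutoff_profile m s \<and> cutoff_profile m s \<le> 1"
  unfolding cutoff_profile_def by (auto intro: power_le_one)

lemma cutoff_profile_antimono: "s \<le> s' \<Longrightarrow> cutoff_profile m s' \<le> cutoff_profile m s"
  unfolding cutoff_profile_def by (intro power_mono) auto

lemma cutoff_profile_eq_0: "1 \<le> s \<Longrightarrow> 1 \<le> m \<Longrightarrow> cutoff_profile m s = 0"
  unfolding cutoff_profile_def by simp

lemma cutoff_profile_0[simp]: "cutoff_profile m 0 = 1"
  unfolding cutoff_profile_def by simp

section \<open>Boxes and supports\<close>

definition conf_cball :: "nat \<Rightarrow> real \<Rightarrow> 'd::finite cfg set" where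
  "conf_cball n R = {x \<in> conf n. \<forall>i<n. norm (x i) \<le> R}"

definition supported_in :: "nat \<Rightarrow> real \<Rightarrow> ('d::finite cfg \<Rightarrow> real) \<Rightarrow> bool" where
  "supported_in n R g \<longleftrightarrow> (\<forall>x\<in>conf n. x \<notin> conf_cball n R \<longrightarrow> g x = 0)"

lemma conf_cball_PiE: "conf_cball n R = PiE {..<n} (\<lambda>_. cball 0 R)"
  by (auto simp: conf_cball_def conf_def PiE_def Pi_def)

lemma conf_cball_PiE_UNIV: "conf_cball n R = PiE UNIV (\<lambda>i. if i < n then cball 0 R else {undefined})"
  by (auto simp: conf_cball_def conf_def PiE_def Pi_def extensional_def split: if_splits)

lemma conf_cball_subset: "conf_cball n R \<subseteq> conf n"
  by (auto simp: conf_cball_def)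

lemma conf_cball_mono: "R \<le> R' \<Longrightarrow> conf_cball n R \<subseteq> conf_cball n R'"
  by (auto simp: conf_cball_def)

lemma compact_conf_cball: "compact (conf_cball n R :: 'd::finite cfg set)"
proof -
  have "compactin (product_topology (\<lambda>_. euclidean) UNIV) (PiE UNIV (\<lambda>i. if i < n then cball (0::real^'d) R else {undefined}))"
    by (subst compactin_PiE) auto
  then show ?thesis by (simp add: conf_cball_PiE_UNIV euclidean_product_topology)
qed

lemma continuous_on_conf_bounded_on_cball:
  fixes g :: "'d::finite cfg \<Rightarrow> real"
  assumes "continuous_on (conf n) g"
  shows "\<exists>C. \<forall>x\<in>conf_cball n R. \<bar>g x\<bar> \<le> C"
proof -
  have "compact (g ` conf_cball n R)"
    using compact_continuous_image[OF continuous_on_subset[OF assms conf_cball_subset] compact_conf_cball] .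
  then obtain a where "\<forall>y\<in>g ` conf_cball n R. norm y \<le> a" using compact_imp_bounded bounded_iff by metis
  then show ?thesis by auto
qed

lemma pdir_in_conf_cball:
  assumes "x \<in> conf_cball n R" "p \<in> dirs n" "\<bar>s\<bar> \<le> d"
  shows "pdir x p s \<in> conf_cball n (R + d)"
proof -
  have "norm (x i + s *\<^sub>R axis (snd p) 1) \<le> R + d" if "i < n" for i
    using norm_triangle_ineq[of "x i" "s *\<^sub>R axis (snd p) (1::real)"] assms that
    by (auto simp: conf_cball_def)
  moreover have "norm (x i) \<le> R + d" if "i < n" for i
    using assms that by (auto simp: conf_cball_def)
  ultimately show ?thesis using assms pdir_in_conf[of x n p s] by (auto simp: conf_cball_def pdir_apply)
qed

lemma pdir_notin_conf_cball:
  assumes "x \<in> conf n" "x \<notin> conf_cball n (R + d)" "p \<in> dirs n" "\<bar>s\<bar> \<le> d"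
  shows "pdir x p s \<notin> conf_cball n R"
proof
  assume "pdir x p s \<in> conf_cball n R"
  from pdir_in_conf_cball[OF this assms(3), of "-s"] assms(4) have "x \<in> conf_cball n (R + d)" by simp
  with assms(2) show False by simp
qed

lemma supported_in_partial:
  fixes G :: "'d::finite cfg \<Rightarrow> real"
  assumes "smooth_upto 0 n G" "supported_in n R G" "p \<in> dirs n"
  shows "supported_in n R (partial p G)"
  unfolding supported_in_def
proof (intro ballI impI)
  fix x :: "'d cfg" assume x: "x \<in> conf n" "x \<notin> conf_cball n R"
  then obtain i where i: "i < n" "norm (x i) > R" by (auto simp: conf_cball_def not_le)
  let ?S = "{s. norm (pdir x p s i) > R}"
  have op: "open ?S"
    using continuous_on_product_then_coordinatewise[OF continuous_on_pdir_param[of UNIV x p], of i]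
    by (intro open_Collect_less continuous_intros) (auto intro: continuous_on_subset)
  have "0 \<in> ?S" using i by simp
  have z: "G (pdir x p s) = 0" if "s \<in> ?S" for s
  proof -
    have "pdir x p s \<notin> conf_cball n R" using that i by (auto simp: conf_cball_def not_le)
    then show ?thesis using assms(2) pdir_in_conf[OF x(1) assms(3)] by (auto simp: supported_in_def)
  qed
  have "((\<lambda>s. G (pdir x p s)) has_real_derivative partial p G x) (at 0)"
    using smooth_upto_has_partial[OF assms(1) assms(3) x(1)] .
  then have "((\<lambda>s. 0) has_real_derivative partial p G x) (at 0)"
    by (rule has_field_derivative_transform_within_open[OF _ op \<open>0 \<in> ?S\<close>]) (use z in auto)
  then show "partial p G x = 0" using DERIV_unique DERIV_const by blast
qed

lemma supported_in_iter_partial: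
  assumes "smooth_upto (length ps) n G" "supported_in n R G" "set ps \<subseteq> dirs n"
  shows "supported_in n R (iter_partial ps G)"
  using assms
proof (induction ps)
  case (Cons p ps)
  then have "smooth_upto 0 n (iter_partial ps G)"
    using smooth_upto_iter_partial[of 0 ps n G] smooth_upto_mono by fastforce
  moreover have "supported_in n R (iter_partial ps G)" using Cons smooth_upto_mono by fastforce
  ultimately show ?case using Cons.prems by (auto intro: supported_in_partial)
qed simp

lemma supported_in_mult: "supported_in n R g \<Longrightarrow> supported_in n R (\<lambda>x. g x * h x)"
  by (simp add: supported_in_def)

lemma supported_in_mono: "supported_in n R G \<Longrightarrow> R \<le> R' \<Longrightarrow> supported_in n R' G"
  using conf_cball_mono by (fastforce simp: supported_in_def)

lemma supported_in_pdir:
  fixes G :: "'d::finite cfg \<Rightarrow> real"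
  assumes "supported_in n R G" "p \<in> dirs n"
  shows "supported_in n (R + \<bar>s\<bar>) (\<lambda>x. G (pdir x p s))"
  unfolding supported_in_def
proof (intro ballI impI)
  fix x :: "'d cfg" assume "x \<in> conf n" "x \<notin> conf_cball n (R + \<bar>s\<bar>)"
  then show "G (pdir x p s) = 0"
    using assms pdir_in_conf[OF _ assms(2)] pdir_notin_conf_cball[OF _ _ assms(2), of x R "\<bar>s\<bar>" s]
    by (simp add: supported_in_def)
qed

text \<open>Written in coordinates, so that its smoothness follows from \<open>smooth_upto_coordinate\<close>.\<close>

definition sqnorm_conf :: "nat \<Rightarrow> 'd::finite cfg \<Rightarrow> real" where
  "sqnorm_conf n x = (\<Sum>i<n. \<Sum>a\<in>UNIV. (x i $ a) * (x i $ a))"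

definition cutoff :: "nat \<Rightarrow> nat \<Rightarrow> nat \<Rightarrow> 'd::finite cfg \<Rightarrow> real" where
  "cutoff m n l x = cutoff_profile m (sqnorm_conf n x * inverse ((real (Suc l))\<^sup>2))"

lemma smooth_upto_sqnorm_conf: "smooth_upto r n (sqnorm_conf n)"
  unfolding sqnorm_conf_def by (intro smooth_upto_sum smooth_upto_mult smooth_upto_coordinate) auto

lemma smooth_upto_cutoff:
  assumes "r + 2 \<le> m"
  shows "smooth_upto r n (cutoff m n l :: 'd::finite cfg \<Rightarrow> real)"
proof -
  have "smooth_upto r n (\<lambda>x::'d cfg. 1 * cutoff_profile m (sqnorm_conf n x * inverse ((real (Suc l))\<^sup>2)))"
    by (rule smooth_upto_compose[OF real_smooth_upto_cutoff_profile[OF assms]])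
      (auto intro!: smooth_upto_mult smooth_upto_sqnorm_conf smooth_upto_const)
  then show ?thesis unfolding cutoff_def by simp
qed

lemma sqnorm_conf_nonneg: "0 \<le> sqnorm_conf n x"
  unfolding sqnorm_conf_def by (intro sum_nonneg) auto

lemma norm_particle_sq_le_sqnorm_conf: "i < n \<Longrightarrow> (norm (x i))\<^sup>2 \<le> sqnorm_conf n x"
proof -
  assume i: "i < n"
  have "(norm (x i))\<^sup>2 = (\<Sum>a\<in>UNIV. (x i $ a) * (x i $ a))"
    by (simp add: power2_norm_eq_inner inner_vec_def)
  also have "\<dots> \<le> sqnorm_conf n x" unfolding sqnorm_conf_def
    using i by (intro member_le_sum[of i "{..<n}" "\<lambda>i. \<Sum>a\<in>UNIV. (x i $ a) * (x i $ a)"]) (auto intro: sum_nonneg)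
  finally show ?thesis .
qed

lemma cutoff_bounds: "0 \<le> cutoff m n l x \<and> cutoff m n l x \<le> 1"
  unfolding cutoff_def by (intro cutoff_profile_bounds) (simp add: sqnorm_conf_nonneg)

lemma supported_in_cutoff:
  assumes "1 \<le> m"
  shows "supported_in n (real (Suc l)) (cutoff m n l)"
  unfolding supported_in_def
proof (intro ballI impI)
  fix x :: "'a cfg" assume x: "x \<in> conf n" "x \<notin> conf_cball n (real (Suc l))"
  then obtain i where i: "i < n" "norm (x i) > real (Suc l)" by (auto simp: conf_cball_def not_le)
  have "(real (Suc l))\<^sup>2 < (norm (x i))\<^sup>2" using i by (intro power_strict_mono) auto
  also have "\<dots> \<le> sqnorm_conf n x" using norm_particle_sq_le_sqnorm_conf[OF i(1)] .
  finally have "1 \<le> sqnorm_conf n x * inverse ((real (Suc l))\<^sup>2)" by (simp add: field_simps)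
  then show "cutoff m n l x = 0" unfolding cutoff_def using cutoff_profile_eq_0 assms by blast
qed

lemma cutoff_mono:
  assumes "l \<le> l'"
  shows "cutoff m n l x \<le> cutoff m n l' x"
  unfolding cutoff_def
proof (rule cutoff_profile_antimono)
  have "inverse ((real (Suc l'))\<^sup>2) \<le> inverse ((real (Suc l))\<^sup>2)"
    using assms by (intro le_imp_inverse_le power_mono) auto
  then show "sqnorm_conf n x * inverse ((real (Suc l'))\<^sup>2) \<le> sqnorm_conf n x * inverse ((real (Suc l))\<^sup>2)"
    by (intro mult_left_mono sqnorm_conf_nonneg)
qed

lemma cutoff_tendsto_1: "(\<lambda>l. cutoff m n l x) \<longlonglongrightarrow> 1"
proof -
  have "(\<lambda>l. inverse (real (Suc l))) \<longlonglongrightarrow> 0" by (rule LIMSEQ_inverse_real_of_nat)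
  then have "(\<lambda>l. (inverse (real (Suc l)))\<^sup>2) \<longlonglongrightarrow> 0\<^sup>2" by (intro tendsto_intros)
  then have "(\<lambda>l. sqnorm_conf n x * inverse ((real (Suc l))\<^sup>2)) \<longlonglongrightarrow> sqnorm_conf n x * 0"
    by (intro tendsto_intros) (simp add: power_inverse)
  then have a: "(\<lambda>l. sqnorm_conf n x * inverse ((real (Suc l))\<^sup>2)) \<longlonglongrightarrow> 0" by simp
  have "(\<lambda>l. cutoff_profile m (sqnorm_conf n x * inverse ((real (Suc l))\<^sup>2))) \<longlonglongrightarrow> cutoff_profile m 0"
    by (rule continuous_on_tendsto_compose[OF continuous_on_cutoff_profile[of UNIV m] a]) simp_all
  then show ?thesis unfolding cutoff_def by simp
qed

section \<open>Lebesgue measure on configuration space\<close>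

lemma product_sigma_finite_lborel: "product_sigma_finite (\<lambda>_. lborel :: 'a::euclidean_space measure)"
  by (simp add: product_sigma_finite_def sigma_finite_lborel)

lemma space_lebPi [simp]: "space (lebPi n) = conf n"
  by (simp add: lebPi_def space_PiM conf_def)

lemma sigma_finite_lebPi: "sigma_finite_measure (lebPi n)"
  unfolding lebPi_def using product_sigma_finite.sigma_finite[OF product_sigma_finite_lborel] by blast

lemma measurable_particle_lebPi: "i < n \<Longrightarrow> (\<lambda>x. x i) \<in> borel_measurable (lebPi n)"
  unfolding lebPi_def using measurable_cong_sets[OF refl sets_lborel]
  by (metis lessThan_iff measurable_component_singleton)

lemma measurable_ident_lebPi_borel: "(\<lambda>x. x) \<in> measurable (lebPi n) (borel :: 'd::finite cfg measure)"
proof -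
  have "(\<lambda>x::'d cfg. x) \<in> measurable (lebPi n) (PiM UNIV (\<lambda>_. borel :: (real^'d) measure))"
  proof (rule measurable_PiM_single')
    fix i :: nat
    show "(\<lambda>x::'d cfg. x i) \<in> borel_measurable (lebPi n)"
    proof (cases "i < n")
      case False
      then have "\<And>x. x \<in> space (lebPi n) \<Longrightarrow> undefined = x i" by (simp add: conf_iff)
      moreover have "(\<lambda>_. undefined :: real^'d) \<in> borel_measurable (lebPi n)" by simp
      ultimately show ?thesis using measurable_cong[of "lebPi n" "\<lambda>_. undefined" "\<lambda>x. x i" borel] by blast
    qed (rule measurable_particle_lebPi)
  qed simp
  moreover have "sets (PiM UNIV (\<lambda>_. borel :: (real^'d) measure)) = sets (borel :: 'd cfg measure)"
    by (rule sets_PiM_equal_borel)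
  ultimately show ?thesis using measurable_cong_sets[OF refl] by blast
qed

lemma borel_measurable_continuous_on_conf:
  fixes g :: "'d::finite cfg \<Rightarrow> real"
  assumes "continuous_on (conf n) g"
  shows "g \<in> borel_measurable (lebPi n)"
proof -
  have "continuous_on UNIV (\<lambda>y::'d cfg. restrict y {..<n})"
  proof (intro continuous_on_coordinatewise_then_product)
    fix i show "continuous_on UNIV (\<lambda>y::'d cfg. restrict y {..<n} i)"
      by (cases "i < n") (auto intro!: continuous_intros continuous_on_product_then_coordinatewise)
  qed
  moreover have "range (\<lambda>y::'d cfg. restrict y {..<n}) \<subseteq> conf n" by (auto simp: conf_iff)
  ultimately have "continuous_on UNIV (\<lambda>y. g (restrict y {..<n}))"
    by (rule continuous_on_compose2[OF assms])
  then have "(\<lambda>y. g (restrict y {..<n})) \<in> borel_measurable borel"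
    by (rule borel_measurable_continuous_onI)
  from measurable_comp[OF measurable_ident_lebPi_borel this]
  have "(\<lambda>y. g (restrict y {..<n})) \<in> borel_measurable (lebPi n)"
    by (simp add: comp_def)
  moreover have "g (restrict x {..<n}) = g x" if "x \<in> space (lebPi n)" for x
    using that by (auto simp: conf_def extensional_restrict PiE_def)
  ultimately show ?thesis using measurable_cong[of "lebPi n" "\<lambda>y. g (restrict y {..<n})" g borel] by blast
qed

lemma conf_cball_sets: "conf_cball n R \<in> sets (lebPi n)"
  unfolding conf_cball_PiE lebPi_def by (intro sets_PiM_I_finite) auto

lemma emeasure_conf_cball_finite: "emeasure (lebPi n) (conf_cball n R :: 'd::finite cfg set) < \<infinity>"
proof -
  have "emeasure (lebPi n) (conf_cball n R :: 'd cfg set) = (\<Prod>i\<in>{..<n}. emeasure lborel (cball (0::real^'d) R))"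
    unfolding conf_cball_PiE lebPi_def by (subst product_sigma_finite.emeasure_PiM[OF product_sigma_finite_lborel]) auto
  also have "\<dots> < \<infinity>" using emeasure_lborel_cball_finite[of "0::real^'d" R]
    by (simp add: power_less_top_ennreal)
  finally show ?thesis .
qed

lemma integrable_supported:
  fixes g :: "'d::finite cfg \<Rightarrow> real"
  assumes "continuous_on (conf n) g" "supported_in n R g"
  shows "integrable (lebPi n) g"
proof -
  obtain C where C: "\<forall>x\<in>conf_cball n R. \<bar>g x\<bar> \<le> C" using continuous_on_conf_bounded_on_cball[OF assms(1)] by blast
  have "integrable (lebPi n) (\<lambda>x. C * indicator (conf_cball n R) x)"
    using conf_cball_sets emeasure_conf_cball_finite by (intro integrable_mult_right integrable_real_indicator) auto
  moreover have "AE x in lebPi n. norm (g x) \<le> norm (C * indicator (conf_cball n R) x)"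
    using C assms(2) by (auto simp: supported_in_def indicator_def intro!: AE_I2)
  ultimately show ?thesis using Bochner_Integration.integrable_bound[OF _ borel_measurable_continuous_on_conf[OF assms(1)]] by blast
qed

lemma measurable_pdir:
  assumes "p \<in> dirs n"
  shows "(\<lambda>x. pdir x p t) \<in> measurable (lebPi n) (lebPi n)"
proof -
  have "(\<lambda>x. \<lambda>i. pdir x p t i) \<in> measurable (lebPi n) (PiM {..<n} (\<lambda>_. lborel))"
  proof (rule measurable_PiM_single')
    fix i assume i: "i \<in> {..<n}"
    have m: "(\<lambda>x::'a cfg. x i) \<in> measurable (lebPi n) lborel"
      using i unfolding lebPi_def by (intro measurable_component_singleton) auto
    then have m': "(\<lambda>x::'a cfg. x i) \<in> borel_measurable (lebPi n)"
      using measurable_cong_sets[OF refl sets_lborel] by simp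
    have c: "(\<lambda>y::real^'a. y + t *\<^sub>R axis (snd p) 1) \<in> borel_measurable borel"
      by (intro borel_measurable_continuous_onI continuous_intros)
    have "(\<lambda>x. pdir x p t i) \<in> borel_measurable (lebPi n)"
    proof (cases "i = fst p")
      case True
      then have "(\<lambda>x. pdir x p t i) = (\<lambda>x. (\<lambda>y::real^'a. y + t *\<^sub>R axis (snd p) 1) (x i))"
        by (simp add: pdir_apply)
      then show ?thesis using measurable_comp[OF m' c] by (simp add: comp_def)
    next
      case False
      then have "(\<lambda>x. pdir x p t i) = (\<lambda>x. x i)" by (simp add: pdir_apply fun_eq_iff)
      then show ?thesis using m' by simp
    qed
    then show "(\<lambda>x. pdir x p t i) \<in> measurable (lebPi n) lborel"
      using measurable_cong_sets[OF refl sets_lborel] by simp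
  next
    show "(\<lambda>x. pdir x p t) \<in> space (lebPi n) \<rightarrow> (\<Pi>\<^sub>E i\<in>{..<n}. space lborel)"
      using pdir_in_conf[OF _ assms] by (auto simp: conf_def)
  qed
  then show ?thesis by (simp add: lebPi_def)
qed

lemma distr_pdir_lebPi:
  fixes p :: "nat \<times> 'd::finite"
  assumes p: "p \<in> dirs n"
  shows "distr (lebPi n) (lebPi n) (\<lambda>x. pdir x p t) = lebPi n"
proof -
  let ?c = "t *\<^sub>R axis (snd p) (1::real) :: real^'d"
  interpret P: product_sigma_finite "\<lambda>_::nat. lborel :: (real^'d) measure" by (rule product_sigma_finite_lborel)
  show ?thesis unfolding lebPi_def
  proof (rule P.PiM_eqI)
    fix A assume A: "\<And>i. i \<in> {..<n} \<Longrightarrow> A i \<in> sets (lborel :: (real^'d) measure)"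
    define A' where "A' i = (if i = fst p then (\<lambda>y. ?c + y) -` A i else A i)" for i
    have cm: "((+) ?c) \<in> measurable borel borel" by (intro borel_measurable_continuous_onI continuous_intros)
    have A': "A' i \<in> sets lborel" if "i \<in> {..<n}" for i
      using A[OF that] measurable_sets[OF cm, of "A i"] unfolding A'_def by auto
    have pre: "(\<lambda>x. pdir x p t) -` PiE {..<n} A \<inter> space (PiM {..<n} (\<lambda>_. lborel)) = PiE {..<n} A'"
      using p by (auto simp: A'_def pdir_apply space_PiM PiE_def Pi_def extensional_def add.commute split: if_splits)
    have em: "emeasure lborel (A' i) = emeasure lborel (A i)" if "i \<in> {..<n}" for i
    proof (cases "i = fst p")
      case True
      have "emeasure lborel (A i) = emeasure (distr lborel borel ((+) ?c)) (A i)"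
        by (simp add: lborel_distr_plus)
      also have "\<dots> = emeasure lborel ((+) ?c -` A i \<inter> space lborel)"
        using A[OF that] by (intro emeasure_distr) auto
      finally show ?thesis using True by (simp add: A'_def)
    qed (simp add: A'_def)
    have "emeasure (distr (PiM {..<n} (\<lambda>_. lborel)) (PiM {..<n} (\<lambda>_. lborel)) (\<lambda>x. pdir x p t)) (PiE {..<n} A)
       = emeasure (PiM {..<n} (\<lambda>_. lborel)) (PiE {..<n} A')"
      using measurable_pdir[OF p] A by (subst emeasure_distr) (auto simp: lebPi_def pre intro!: sets_PiM_I_finite)
    also have "\<dots> = (\<Prod>i\<in>{..<n}. emeasure lborel (A' i))"
      using A' by (intro P.emeasure_PiM) auto
    also have "\<dots> = (\<Prod>i\<in>{..<n}. emeasure lborel (A i))"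
      using em by simp
    finally show "emeasure (distr (PiM {..<n} (\<lambda>_. lborel)) (PiM {..<n} (\<lambda>_. lborel)) (\<lambda>x. pdir x p t)) (PiE {..<n} A)
       = (\<Prod>i\<in>{..<n}. emeasure lborel (A i))" .
  qed auto
qed

lemma integral_pdir_lebPi:
  fixes f :: "'d::finite cfg \<Rightarrow> real"
  assumes "p \<in> dirs n" "f \<in> borel_measurable (lebPi n)"
  shows "(\<integral>x. f (pdir x p t) \<partial>lebPi n) = (\<integral>x. f x \<partial>lebPi n)"
  using integral_distr[OF measurable_pdir[OF assms(1)] assms(2), of t] distr_pdir_lebPi[OF assms(1)] by simp

section \<open>Integration by parts\<close>

lemma abs_diff_pdir_le:
  assumes "smooth_upto 0 n g" "x \<in> conf n" "p \<in> dirs n"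
    and bound: "\<And>s. \<bar>s\<bar> \<le> \<bar>t\<bar> \<Longrightarrow> \<bar>partial p g (pdir x p s)\<bar> \<le> C"
  shows "\<bar>g (pdir x p t) - g x\<bar> \<le> C * \<bar>t\<bar>"
proof -
  have "norm ((\<lambda>s. g (pdir x p s)) t - (\<lambda>s. g (pdir x p s)) 0) \<le> C * norm (t - 0)"
  proof (rule field_differentiable_bound[where S = "cball 0 \<bar>t\<bar>"])
    fix s :: real assume "s \<in> cball 0 \<bar>t\<bar>"
    then show "((\<lambda>s. g (pdir x p s)) has_field_derivative partial p g (pdir x p s)) (at s within cball 0 \<bar>t\<bar>)"
      and "norm (partial p g (pdir x p s)) \<le> C"
      using smooth_upto_has_partial_at[OF assms(1-3)] bound
      by (auto intro: has_field_derivative_at_within)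
  qed auto
  then show ?thesis by simp
qed

text \<open>By the mean value theorem, with the partial derivative bounded on the box of radius \<open>R + 1\<close>.\<close>

lemma difference_quotient_bounded:
  assumes "smooth_upto 1 n F" "p \<in> dirs n"
  obtains C where "\<And>x s. x \<in> conf_cball n R \<Longrightarrow> \<bar>s\<bar> \<le> 1 \<Longrightarrow> \<bar>(F (pdir x p s) - F x) / s\<bar> \<le> C"
proof -
  have "continuous_on (conf n) (partial p F)"
    using smooth_upto_imp_continuous_on[OF smooth_upto_partial[of 0, OF _ assms(2)]] assms(1) by simp
  then obtain C where C: "\<forall>x\<in>conf_cball n (R + 1). \<bar>partial p F x\<bar> \<le> C"
    using continuous_on_conf_bounded_on_cball by blast
  have "\<bar>(F (pdir x p s) - F x) / s\<bar> \<le> \<bar>C\<bar>" if x: "x \<in> conf_cball n R" and s: "\<bar>s\<bar> \<le> 1" for x s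
  proof -
    have "x \<in> conf n" using x conf_cball_subset by blast
    have "\<bar>F (pdir x p s) - F x\<bar> \<le> C * \<bar>s\<bar>"
    proof (rule abs_diff_pdir_le[OF smooth_upto_mono[OF assms(1) le0] \<open>x \<in> conf n\<close> assms(2)])
      fix s' :: real assume "\<bar>s'\<bar> \<le> \<bar>s\<bar>"
      then have "pdir x p s' \<in> conf_cball n (R + 1)" using pdir_in_conf_cball[OF x assms(2)] s by simp
      then show "\<bar>partial p F (pdir x p s')\<bar> \<le> C" using C by blast
    qed
    also have "\<dots> \<le> \<bar>C\<bar> * \<bar>s\<bar>" by (simp add: mult_right_mono)
    finally show ?thesis by (cases "s = 0") (auto simp: abs_divide divide_le_eq)
  qed
  then show ?thesis using that by blast
qed

lemma difference_quotient_tendsto: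
  fixes f :: "real \<Rightarrow> real"
  assumes "(f has_real_derivative D) (at 0)" "filterlim t (at 0) sequentially"
  shows "(\<lambda>l. (f (t l) - f 0) / t l) \<longlonglongrightarrow> D"
proof -
  have "((\<lambda>h. (f h - f 0) / h) \<longlongrightarrow> D) (at 0)" using assms(1) by (simp add: DERIV_def)
  from filterlim_compose[OF this assms(2)] show ?thesis .
qed

text \<open>The vanishing hypothesis provides the compact support for the dominating function.\<close>

lemma tendsto_integral_difference_quotient:
  fixes F H :: "'d::finite cfg \<Rightarrow> real"
  assumes p: "p \<in> dirs n" and F: "smooth_upto 1 n F" and H: "continuous_on (conf n) H"
    and vanish: "\<And>x s. x \<in> conf n \<Longrightarrow> x \<notin> conf_cball n R \<Longrightarrow> \<bar>s\<bar> \<le> 1 \<Longrightarrow>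
      H x * (F (pdir x p s) - F x) = 0"
    and t: "filterlim t (at 0) sequentially" "\<And>l. \<bar>t l\<bar> \<le> 1"
  shows "(\<lambda>l. \<integral>x. H x * ((F (pdir x p (t l)) - F x) / t l) \<partial>lebPi n)
           \<longlonglongrightarrow> (\<integral>x. H x * partial p F x \<partial>lebPi n)"
proof -
  obtain CH where CH: "\<forall>x\<in>conf_cball n R. \<bar>H x\<bar> \<le> CH"
    using continuous_on_conf_bounded_on_cball[OF H] by blast
  obtain C where C: "\<And>x s. x \<in> conf_cball n R \<Longrightarrow> \<bar>s\<bar> \<le> 1 \<Longrightarrow> \<bar>(F (pdir x p s) - F x) / s\<bar> \<le> C"
    using difference_quotient_bounded[OF F p] by blast
  have cF: "continuous_on (conf n) F" using smooth_upto_imp_continuous_on[OF F] .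
  have cdF: "continuous_on (conf n) (partial p F)"
    using smooth_upto_imp_continuous_on[OF smooth_upto_partial[of 0, OF _ p]] F by simp
  have cFs: "continuous_on (conf n) (\<lambda>x. F (pdir x p s))" for s
    by (rule continuous_on_compose_pdir[OF cF p])
  show ?thesis
  proof (rule integral_dominated_convergence[where w = "\<lambda>x. CH * C * indicator (conf_cball n R) x"])
    show "(\<lambda>x. H x * partial p F x) \<in> borel_measurable (lebPi n)"
      by (rule borel_measurable_continuous_on_conf) (rule continuous_on_mult[OF H cdF])
    have "(\<lambda>x. H x * (F (pdir x p s) - F x)) \<in> borel_measurable (lebPi n)" for s
      by (rule borel_measurable_continuous_on_conf) (intro continuous_on_mult[OF H] continuous_on_diff cF cFs)
    then show "(\<lambda>x. H x * ((F (pdir x p (t l)) - F x) / t l)) \<in> borel_measurable (lebPi n)" for l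
      using borel_measurable_divide[OF _ borel_measurable_const, of "\<lambda>x. H x * (F (pdir x p (t l)) - F x)"]
      by simp
    show "integrable (lebPi n) (\<lambda>x. CH * C * indicator (conf_cball n R) x)"
      using conf_cball_sets emeasure_conf_cball_finite
      by (intro integrable_mult_right integrable_real_indicator) auto
    show "AE x in lebPi n. (\<lambda>l. H x * ((F (pdir x p (t l)) - F x) / t l)) \<longlonglongrightarrow> H x * partial p F x"
    proof (rule AE_I2)
      fix x :: "'d cfg" assume "x \<in> space (lebPi n)"
      then have "(\<lambda>l. (F (pdir x p (t l)) - F (pdir x p 0)) / t l) \<longlonglongrightarrow> partial p F x"
        using difference_quotient_tendsto[OF smooth_upto_has_partial[OF F p] t(1)] by simp
      then show "(\<lambda>l. H x * ((F (pdir x p (t l)) - F x) / t l)) \<longlonglongrightarrow> H x * partial p F x"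
        by (intro tendsto_mult_left) simp
    qed
    show "AE x in lebPi n. norm (H x * ((F (pdir x p (t l)) - F x) / t l))
        \<le> CH * C * indicator (conf_cball n R) x" for l
    proof (rule AE_I2)
      fix x :: "'d cfg" assume x: "x \<in> space (lebPi n)"
      show "norm (H x * ((F (pdir x p (t l)) - F x) / t l)) \<le> CH * C * indicator (conf_cball n R) x"
      proof (cases "x \<in> conf_cball n R")
        case True
        have "\<bar>H x\<bar> * \<bar>(F (pdir x p (t l)) - F x) / t l\<bar> \<le> CH * C"
          using CH C[OF True t(2)] True by (intro mult_mono) auto
        then show ?thesis using True by (simp add: abs_mult)
      next
        case False
        then show ?thesis using vanish[of x "t l"] x t(2) by simp
      qed
    qed
  qed
qed

text \<open>Translation invariance of Lebesgue measure moves a difference quotient from \<open>F\<close> to \<open>G\<close>.\<close>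

lemma integral_difference_quotient_shift:
  fixes F G :: "'d::finite cfg \<Rightarrow> real"
  assumes p: "p \<in> dirs n" and F: "continuous_on (conf n) F" and G: "continuous_on (conf n) G"
    and supp: "supported_in n R G"
  shows "(\<integral>x. G x * ((F (pdir x p s) - F x) / s) \<partial>lebPi n) =
      - (\<integral>x. F x * ((G (pdir x p (- s)) - G x) / - s) \<partial>lebPi n)"
proof -
  have integrable: "integrable (lebPi n) (\<lambda>x. G (pdir x p s') * F (pdir x p s''))" for s' s''
  proof (rule integrable_supported)
    show "continuous_on (conf n) (\<lambda>x. G (pdir x p s') * F (pdir x p s''))"
      by (rule continuous_on_mult[OF continuous_on_compose_pdir[OF G p] continuous_on_compose_pdir[OF F p]])
    show "supported_in n (R + \<bar>s'\<bar>) (\<lambda>x. G (pdir x p s') * F (pdir x p s''))"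
      using supported_in_pdir[OF supp p, of s'] by (simp add: supported_in_def)
  qed
  have "(\<integral>x. G x * F (pdir x p s) \<partial>lebPi n) = (\<integral>x. G (pdir x p (- s)) * F x \<partial>lebPi n)"
    using integral_pdir_lebPi[OF p borel_measurable_continuous_on_conf, of "\<lambda>x. G (pdir x p (- s)) * F x" s]
      continuous_on_mult[OF continuous_on_compose_pdir[OF G p] F]
    by simp
  moreover have "(\<integral>x. G x * ((F (pdir x p s) - F x) / s) \<partial>lebPi n) =
      ((\<integral>x. G x * F (pdir x p s) \<partial>lebPi n) - (\<integral>x. G x * F x \<partial>lebPi n)) / s"
    using integrable[of 0 s] integrable[of 0 0] by (simp add: right_diff_distrib)
  moreover have "(\<integral>x. F x * ((G (pdir x p (- s)) - G x) / - s) \<partial>lebPi n) =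
      ((\<integral>x. G (pdir x p (- s)) * F x \<partial>lebPi n) - (\<integral>x. G x * F x \<partial>lebPi n)) / - s"
    using integrable[of "- s" 0] integrable[of 0 0] by (simp add: right_diff_distrib mult.commute)
  ultimately show ?thesis by auto
qed

lemma integral_by_parts:
  fixes F G :: "'d::finite cfg \<Rightarrow> real"
  assumes p: "p \<in> dirs n" and F: "smooth_upto 1 n F" and G: "smooth_upto 1 n G"
    and supp: "supported_in n R G"
  shows "(\<integral>x. G x * partial p F x \<partial>lebPi n) = - (\<integral>x. partial p G x * F x \<partial>lebPi n)"
proof -
  define t where "t l = inverse (real (Suc l))" for l
  have t_bound: "\<bar>t l\<bar> \<le> 1" "\<bar>- t l\<bar> \<le> 1" for l by (auto simp: t_def field_simps)
  have "t \<longlonglongrightarrow> 0" unfolding t_def by (rule LIMSEQ_inverse_real_of_nat)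
  moreover have "t l \<noteq> 0" for l by (simp add: t_def)
  ultimately have t: "filterlim t (at 0) sequentially" "filterlim (\<lambda>l. - t l) (at 0) sequentially"
    using tendsto_minus[of t 0] by (auto simp: filterlim_at)
  have cF: "continuous_on (conf n) F" and cG: "continuous_on (conf n) G"
    using F G smooth_upto_imp_continuous_on by blast+
  have vanish_G: "F x * (G (pdir x p s) - G x) = 0"
    if "x \<in> conf n" "x \<notin> conf_cball n (R + 1)" "\<bar>s\<bar> \<le> 1" for x s
    using supported_in_mono[OF supported_in_pdir[OF supp p, of s], of "R + 1"]
      supported_in_mono[OF supp, of "R + 1"] that
    by (simp add: supported_in_def)
  have "(\<lambda>l. \<integral>x. G x * ((F (pdir x p (t l)) - F x) / t l) \<partial>lebPi n)
      \<longlonglongrightarrow> (\<integral>x. G x * partial p F x \<partial>lebPi n)"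
    using supp
    by (intro tendsto_integral_difference_quotient[OF p F cG _ t(1) t_bound(1), where R = R])
      (simp add: supported_in_def)
  moreover have "(\<lambda>l. \<integral>x. G x * ((F (pdir x p (t l)) - F x) / t l) \<partial>lebPi n)
      \<longlonglongrightarrow> - (\<integral>x. F x * partial p G x \<partial>lebPi n)"
    using tendsto_minus[OF tendsto_integral_difference_quotient[OF p G cF vanish_G t(2) t_bound(2)]]
    by (simp only: integral_difference_quotient_shift[OF p cF cG supp])
  ultimately show ?thesis
    using LIMSEQ_unique by (simp add: mult.commute)
qed

lemma integral_by_parts_iter_partial:
  fixes F G :: "'d::finite cfg \<Rightarrow> real"
  assumes "set ps \<subseteq> dirs n" "smooth_upto (length ps) n F" "smooth_upto (length ps) n G"
    and "supported_in n R G"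
  shows "(\<integral>x. G x * iter_partial ps F x \<partial>lebPi n) =
         (-1) ^ length ps * (\<integral>x. iter_partial (rev ps) G x * F x \<partial>lebPi n)"
  using assms
proof (induction ps arbitrary: G)
  case (Cons p ps)
  have p: "p \<in> dirs n" using Cons.prems by simp
  have "(\<integral>x. G x * iter_partial (p # ps) F x \<partial>lebPi n) =
      - (\<integral>x. partial p G x * iter_partial ps F x \<partial>lebPi n)"
    using Cons.prems smooth_upto_iter_partial[of 1 ps n F] smooth_upto_mono[of "Suc (length ps)" n G 1]
    by (simp add: integral_by_parts[OF p])
  also have "(\<integral>x. partial p G x * iter_partial ps F x \<partial>lebPi n) =
      (-1) ^ length ps * (\<integral>x. iter_partial (rev ps) (partial p G) x * F x \<partial>lebPi n)"
    using Cons.prems p smooth_upto_mono[of "Suc (length ps)" n F "length ps"]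
      smooth_upto_mono[of "Suc (length ps)" n G 0]
    by (intro Cons.IH) (auto intro: smooth_upto_partial supported_in_partial)
  finally show ?case by (simp add: iter_partial_append_single)
qed simp

section \<open>Marginals\<close>

lemma lebPi_Suc: "lebPi (Suc k) = PiM (insert k {..<k}) (\<lambda>_. lborel)"
  by (simp add: lebPi_def lessThan_Suc)

text \<open>The marginal as a nonnegative integral, defined without any integrability assumption;
  \<open>marginal\<close> is its real part (\<open>marginal_eq_enn2real\<close>).\<close>

definition marginal_nn :: "nat \<Rightarrow> ('d::finite cfg \<Rightarrow> real) \<Rightarrow> nat \<Rightarrow> 'd cfg \<Rightarrow> ennreal" where
  "marginal_nn N m j x = (\<integral>\<^sup>+ y. ennreal (m (merge {..<j} {j..<N} (x, y))) \<partial>PiM {j..<N} (\<lambda>_. lborel))"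

lemma merge_in_conf: "j \<le> N \<Longrightarrow> merge {..<j} {j..<N} (x, y) \<in> conf N"
  by (auto simp: conf_iff merge_def)

lemma measurable_merge_comp:
  fixes m :: "'d::finite cfg \<Rightarrow> real"
  assumes "m \<in> borel_measurable (lebPi N)" "j \<le> N"
  shows "(\<lambda>z. m (merge {..<j} {j..<N} z))
    \<in> borel_measurable (PiM {..<j} (\<lambda>_. lborel) \<Otimes>\<^sub>M PiM {j..<N} (\<lambda>_. lborel))"
proof -
  have u: "{..<j} \<union> {j..<N} = {..<N}" using assms(2) by auto
  have "merge {..<j} {j..<N}
      \<in> measurable (PiM {..<j} (\<lambda>_. lborel) \<Otimes>\<^sub>M PiM {j..<N} (\<lambda>_. lborel)) (lebPi N :: 'd cfg measure)"
    using measurable_merge[where I="{..<j}" and J="{j..<N}" and M="\<lambda>_. lborel"] unfolding lebPi_def u .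
  from measurable_comp[OF this assms(1)] show ?thesis by (simp add: comp_def)
qed

lemma measurable_merge_section:
  fixes m :: "'d::finite cfg \<Rightarrow> real"
  assumes "m \<in> borel_measurable (lebPi N)" "j \<le> N" "x \<in> conf j"
  shows "(\<lambda>y. m (merge {..<j} {j..<N} (x, y))) \<in> borel_measurable (PiM {j..<N} (\<lambda>_. lborel))"
  using measurable_Pair2[OF measurable_merge_comp[OF assms(1,2)], of x] assms(3)
  by (simp add: space_PiM conf_def)

lemma borel_measurable_marginal_nn:
  fixes m :: "'d::finite cfg \<Rightarrow> real"
  assumes "m \<in> borel_measurable (lebPi N)" "j \<le> N"
  shows "marginal_nn N m j \<in> borel_measurable (lebPi j)"
proof -
  interpret S: sigma_finite_measure "PiM {j..<N} (\<lambda>_. lborel :: (real^'d) measure)"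
    using product_sigma_finite.sigma_finite[OF product_sigma_finite_lborel] by blast
  show ?thesis unfolding marginal_nn_def lebPi_def
    by (rule S.borel_measurable_nn_integral) (use measurable_merge_comp[OF assms] in simp)
qed

lemma marginal_eq_enn2real:
  fixes m :: "'d::finite cfg \<Rightarrow> real"
  assumes "m \<in> borel_measurable (lebPi N)" "j \<le> N" "x \<in> conf j" "\<forall>z\<in>conf N. 0 \<le> m z"
  shows "marginal N m j x = enn2real (marginal_nn N m j x)"
  unfolding marginal_def marginal_nn_def
  by (rule integral_eq_nn_integral[OF measurable_merge_section[OF assms(1-3)]])
     (intro AE_I2, simp add: assms(4)[rule_format, OF merge_in_conf[OF assms(2)]])

lemma nn_integral_marginal_nn:
  fixes m :: "'d::finite cfg \<Rightarrow> real"
  assumes "m \<in> borel_measurable (lebPi N)" "j \<le> N"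
  shows "(\<integral>\<^sup>+ x. marginal_nn N m j x \<partial>lebPi j) = (\<integral>\<^sup>+ z. ennreal (m z) \<partial>lebPi N)"
proof -
  have u: "{..<j} \<union> {j..<N} = {..<N}" using assms(2) by auto
  have "(\<integral>\<^sup>+ z. ennreal (m z) \<partial>PiM ({..<j} \<union> {j..<N}) (\<lambda>_. lborel)) =
    (\<integral>\<^sup>+ x. \<integral>\<^sup>+ y. ennreal (m (merge {..<j} {j..<N} (x, y))) \<partial>PiM {j..<N} (\<lambda>_. lborel) \<partial>PiM {..<j} (\<lambda>_. lborel))"
  proof (rule product_sigma_finite.product_nn_integral_fold[OF product_sigma_finite_lborel])
    show "(\<lambda>z. ennreal (m z)) \<in> borel_measurable (PiM ({..<j} \<union> {j..<N}) (\<lambda>_. lborel))"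
      unfolding u using measurable_compose[OF assms(1)[unfolded lebPi_def] measurable_ennreal] .
  qed auto
  then show ?thesis unfolding marginal_nn_def lebPi_def u by simp
qed

lemma merge_fun_upd:
  "k < N \<Longrightarrow> merge {..<k} {k..<N} (x, y(k := v)) = merge {..<Suc k} {Suc k..<N} (x(k := v), y)"
  by (auto simp: merge_def fun_eq_iff)

lemma marginal_nn_Suc:
  fixes m :: "'d::finite cfg \<Rightarrow> real"
  assumes "m \<in> borel_measurable (lebPi N)" "k < N" "x \<in> conf k"
  shows "marginal_nn N m k x = (\<integral>\<^sup>+ v. marginal_nn N m (Suc k) (x(k := v)) \<partial>lborel)"
proof -
  have ins: "{k..<N} = insert k {Suc k..<N}" using assms(2) by auto
  define h where "h y = ennreal (m (merge {..<k} {k..<N} (x, y)))" for y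
  have me: "h \<in> borel_measurable (PiM (insert k {Suc k..<N}) (\<lambda>_. lborel))"
    unfolding h_def ins[symmetric] using measurable_merge_section[OF assms(1) _ assms(3)] assms(2) by simp
  have "marginal_nn N m k x = integral\<^sup>N (PiM (insert k {Suc k..<N}) (\<lambda>_. lborel)) h"
    unfolding marginal_nn_def h_def ins[symmetric] ..
  also have "\<dots> = (\<integral>\<^sup>+ v. \<integral>\<^sup>+ y. h (y(k := v)) \<partial>PiM {Suc k..<N} (\<lambda>_. lborel) \<partial>lborel)"
    by (rule product_sigma_finite.product_nn_integral_insert_rev[OF product_sigma_finite_lborel _ _ me]) auto
  also have "\<dots> = (\<integral>\<^sup>+ v. marginal_nn N m (Suc k) (x(k := v)) \<partial>lborel)"
    unfolding marginal_nn_def h_def by (simp only: merge_fun_upd[OF assms(2)])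
  finally show ?thesis .
qed

lemma measurable_marginal_nn_fun_upd:
  fixes m :: "'d::finite cfg \<Rightarrow> real"
  assumes "m \<in> borel_measurable (lebPi N)" "Suc k \<le> N" "x \<in> conf k"
  shows "(\<lambda>v. marginal_nn N m (Suc k) (x(k := v))) \<in> borel_measurable lborel"
proof -
  have "(\<lambda>v. x(k := v)) \<in> measurable lborel (lebPi (Suc k) :: 'd cfg measure)"
    unfolding lebPi_Suc using assms(3)
    by (intro measurable_component_update) (auto simp: space_PiM conf_def)
  from measurable_comp[OF this borel_measurable_marginal_nn[OF assms(1,2)]] show ?thesis by (simp add: comp_def)
qed

lemma marginal_eq_integral_Suc:
  fixes m :: "'d::finite cfg \<Rightarrow> real"
  assumes "m \<in> borel_measurable (lebPi N)" "k < N" "x \<in> conf k" "\<forall>z\<in>conf N. 0 \<le> m z"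
    and fin: "marginal_nn N m k x \<noteq> \<infinity>"
  shows "marginal N m k x = (\<integral>v. marginal N m (Suc k) (x(k := v)) \<partial>lborel)"
proof -
  have me: "(\<lambda>v. marginal_nn N m (Suc k) (x(k := v))) \<in> borel_measurable lborel"
    using measurable_marginal_nn_fun_upd[OF assms(1) _ assms(3)] assms(2) by simp
  have "(\<integral>v. marginal N m (Suc k) (x(k := v)) \<partial>lborel)
      = (\<integral>v. enn2real (marginal_nn N m (Suc k) (x(k := v))) \<partial>lborel)"
    using marginal_eq_enn2real[OF assms(1) _ fun_upd_in_conf_Suc[OF assms(3)] assms(4)] assms(2) by simp
  also have "\<dots> = enn2real (\<integral>\<^sup>+ v. ennreal (enn2real (marginal_nn N m (Suc k) (x(k := v)))) \<partial>lborel)"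
    by (rule integral_eq_nn_integral) (use me in auto)
  also have "(\<integral>\<^sup>+ v. ennreal (enn2real (marginal_nn N m (Suc k) (x(k := v)))) \<partial>lborel)
      = (\<integral>\<^sup>+ v. marginal_nn N m (Suc k) (x(k := v)) \<partial>lborel)"
  proof (rule nn_integral_cong_AE)
    have "(\<integral>\<^sup>+ v. marginal_nn N m (Suc k) (x(k := v)) \<partial>lborel) \<noteq> \<infinity>"
      using fin marginal_nn_Suc[OF assms(1-3)] by simp
    from nn_integral_PInf_AE[OF me this]
    show "AE v in lborel. ennreal (enn2real (marginal_nn N m (Suc k) (x(k := v)))) = marginal_nn N m (Suc k) (x(k := v))"
      by eventually_elim (simp add: less_top)
  qed
  also have "\<dots> = marginal_nn N m k x" using marginal_nn_Suc[OF assms(1-3)] by simp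
  finally have "(\<integral>v. marginal N m (Suc k) (x(k := v)) \<partial>lborel) = enn2real (marginal_nn N m k x)" .
  moreover have "marginal N m k x = enn2real (marginal_nn N m k x)"
    using marginal_eq_enn2real[OF assms(1) _ assms(3,4)] assms(2) by simp
  ultimately show ?thesis by simp
qed

lemma emeasure_space_PiM_lborel_nonzero:
  assumes "finite I"
  shows "emeasure (PiM I (\<lambda>_. lborel :: 'a::euclidean_space measure)) (space (PiM I (\<lambda>_. lborel))) \<noteq> 0"
proof -
  have "space (PiM I (\<lambda>_. lborel :: 'a measure)) = PiE I (\<lambda>_. UNIV)" by (simp add: space_PiM)
  moreover have "emeasure (PiM I (\<lambda>_. lborel :: 'a measure)) (PiE I (\<lambda>_. UNIV)) = (\<Prod>i\<in>I. emeasure lborel (UNIV :: 'a set))"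
    by (rule product_sigma_finite.emeasure_PiM[OF product_sigma_finite_lborel assms]) simp
  moreover have "(\<Prod>i\<in>I. emeasure lborel (UNIV :: 'a set)) \<noteq> 0"
    using assms by (induction I rule: finite_induct) (simp_all add: ennreal_top_mult)
  ultimately show ?thesis by simp
qed

lemma marginal_nn_pos:
  fixes m :: "'d::finite cfg \<Rightarrow> real"
  assumes "m \<in> borel_measurable (lebPi N)" "j \<le> N" "x \<in> conf j" "\<forall>z\<in>conf N. 0 < m z"
  shows "marginal_nn N m j x > 0"
proof (rule ccontr)
  assume "\<not> marginal_nn N m j x > 0"
  moreover have "(\<lambda>y. ennreal (m (merge {..<j} {j..<N} (x, y)))) \<in> borel_measurable (PiM {j..<N} (\<lambda>_. lborel))"
    using measurable_compose[OF measurable_merge_section[OF assms(1-3)] measurable_ennreal] .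
  ultimately have "AE y in PiM {j..<N} (\<lambda>_. lborel). ennreal (m (merge {..<j} {j..<N} (x, y))) = 0"
    by (simp add: marginal_nn_def nn_integral_0_iff_AE)
  moreover have "AE y in PiM {j..<N} (\<lambda>_. lborel). ennreal (m (merge {..<j} {j..<N} (x, y))) \<noteq> 0"
    using assms(4) merge_in_conf[OF assms(2)] by (intro AE_I2) (auto simp: ennreal_eq_0_iff not_le)
  ultimately have "AE y in PiM {j..<N} (\<lambda>_. lborel :: (real^'d) measure). False"
    by eventually_elim simp
  then show False
    using emeasure_space_PiM_lborel_nonzero[of "{j..<N}", where 'a="real^'d"]
    by (metis ae_filter_eq_bot_iff finite_atLeastLessThan trivial_limit_def)
qed

lemma AE_marginal_nn_finite:
  fixes m :: "'d::finite cfg \<Rightarrow> real"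
  assumes "m \<in> borel_measurable (lebPi N)" "j \<le> N" "(\<integral>\<^sup>+ z. ennreal (m z) \<partial>lebPi N) = 1"
  shows "AE x in lebPi j. marginal_nn N m j x \<noteq> \<infinity>"
  by (rule nn_integral_PInf_AE[OF borel_measurable_marginal_nn[OF assms(1,2)]]) (use nn_integral_marginal_nn[OF assms(1,2)] assms(3) in simp)

lemma marginal_nonneg:
  fixes m :: "'d::finite cfg \<Rightarrow> real"
  assumes "m \<in> borel_measurable (lebPi N)" "j \<le> N" "x \<in> conf j" "\<forall>z\<in>conf N. 0 \<le> m z"
  shows "0 \<le> marginal N m j x"
  using marginal_eq_enn2real[OF assms] by simp

lemma AE_marginal_pos:
  fixes m :: "'d::finite cfg \<Rightarrow> real"
  assumes "m \<in> borel_measurable (lebPi N)" "j \<le> N" "\<forall>z\<in>conf N. 0 < m z" "(\<integral>\<^sup>+ z. ennreal (m z) \<partial>lebPi N) = 1"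
  shows "AE x in lebPi j. marginal N m j x > 0"
  using AE_marginal_nn_finite[OF assms(1,2,4)]
proof (rule AE_mp, intro AE_I2 impI)
  fix x :: "'d cfg" assume x: "x \<in> space (lebPi j)" and f: "marginal_nn N m j x \<noteq> \<infinity>"
  have p: "marginal_nn N m j x > 0" using marginal_nn_pos[OF assms(1,2) _ assms(3)] x by simp
  have "marginal N m j x = enn2real (marginal_nn N m j x)"
    using marginal_eq_enn2real[OF assms(1,2)] x assms(3) by (simp add: less_imp_le)
  then show "marginal N m j x > 0" using p f by (simp add: enn2real_positive_iff less_top)
qed

lemma nn_integral_marginal_le_1:
  fixes m :: "'d::finite cfg \<Rightarrow> real"
  assumes "m \<in> borel_measurable (lebPi N)" "j \<le> N" "\<forall>z\<in>conf N. 0 \<le> m z" "(\<integral>\<^sup>+ z. ennreal (m z) \<partial>lebPi N) = 1"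
  shows "(\<integral>\<^sup>+ x. ennreal (marginal N m j x) \<partial>lebPi j) \<le> 1"
proof -
  have "(\<integral>\<^sup>+ x. ennreal (marginal N m j x) \<partial>lebPi j) \<le> (\<integral>\<^sup>+ x. marginal_nn N m j x \<partial>lebPi j)"
  proof (rule nn_integral_mono)
    fix x :: "'d cfg" assume "x \<in> space (lebPi j)"
    then have "marginal N m j x = enn2real (marginal_nn N m j x)" using marginal_eq_enn2real[OF assms(1,2) _ assms(3)] by simp
    then show "ennreal (marginal N m j x) \<le> marginal_nn N m j x" by (simp add: ennreal_enn2real_if)
  qed
  then show ?thesis using nn_integral_marginal_nn[OF assms(1,2)] assms(4) by simp
qed

section \<open>Adding one particle\<close>

lemma measurable_fun_upd_pair:
  "(\<lambda>z. (snd z)(k := fst z)) \<in> measurable (lborel \<Otimes>\<^sub>M lebPi k) (lebPi (Suc k) :: 'd::finite cfg measure)"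
  unfolding lebPi_Suc
  by (rule measurable_fun_upd[where J = "{..<k}"]) (auto simp: lebPi_def)

lemma measurable_fun_upd_pair':
  "(\<lambda>z. (fst z)(k := snd z)) \<in> measurable (lebPi k \<Otimes>\<^sub>M lborel) (lebPi (Suc k) :: 'd::finite cfg measure)"
  unfolding lebPi_Suc
  by (rule measurable_fun_upd[where J = "{..<k}"]) (auto simp: lebPi_def)

lemma measurable_fun_upd_lebPi:
  "(\<lambda>x. x(k := v)) \<in> measurable (lebPi k) (lebPi (Suc k) :: 'd::finite cfg measure)"
  unfolding lebPi_Suc
  by (rule measurable_fun_upd[where J = "{..<k}"]) (auto simp: lebPi_def)
lemma pair_sigma_finite_lebPi_lborel: "pair_sigma_finite (lebPi k :: 'd::finite cfg measure) lborel"
  by (simp add: pair_sigma_finite_def sigma_finite_lebPi lborel.sigma_finite_measure_axioms)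

lemma nn_integral_lebPi_Suc:
  fixes h :: "'d::finite cfg \<Rightarrow> ennreal"
  assumes "h \<in> borel_measurable (lebPi (Suc k))"
  shows "(\<integral>\<^sup>+ z. h z \<partial>lebPi (Suc k)) = (\<integral>\<^sup>+ v. \<integral>\<^sup>+ x. h (x(k := v)) \<partial>lebPi k \<partial>lborel)"
    and "(\<integral>\<^sup>+ z. h z \<partial>lebPi (Suc k)) = (\<integral>\<^sup>+ x. \<integral>\<^sup>+ v. h (x(k := v)) \<partial>lborel \<partial>lebPi k)"
  using product_sigma_finite.product_nn_integral_insert_rev[OF product_sigma_finite_lborel, of "{..<k}" k h]
    product_sigma_finite.product_nn_integral_insert[OF product_sigma_finite_lborel, of "{..<k}" k h] assms
  by (simp_all add: lebPi_Suc) (simp_all add: lebPi_def)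

lemma AE_lebPi_Suc_fun_upd:
  assumes P: "{z \<in> space (lebPi (Suc k)). \<not> P z} \<in> sets (lebPi (Suc k))"
    and AE: "AE z in lebPi (Suc k). P z"
  shows "AE v in lborel. AE x in lebPi k. P (x(k := v))"
proof -
  define S where "S = {z \<in> space (lebPi (Suc k)). \<not> P z}"
  have S: "S \<in> sets (lebPi (Suc k))" using P by (simp add: S_def)
  have "emeasure (lebPi (Suc k)) S = 0"
    using AE AE_iff_measurable[OF S] S_def by simp
  then have "(\<integral>\<^sup>+ z. indicator S z \<partial>lebPi (Suc k)) = 0"
    using S by simp
  then have "(\<integral>\<^sup>+ v. \<integral>\<^sup>+ x. indicator S (x(k := v)) \<partial>lebPi k \<partial>lborel) = 0"
    using nn_integral_lebPi_Suc(1)[where h = "indicator S" and k = k] S by simp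
  moreover have "(\<lambda>v. \<integral>\<^sup>+ x. indicator S (x(k := v)) \<partial>lebPi k) \<in> borel_measurable lborel"
    using sigma_finite_measure.borel_measurable_nn_integral[OF sigma_finite_lebPi,
        of "\<lambda>v x. indicator S (x(k := v))" lborel]
      measurable_compose[OF measurable_fun_upd_pair borel_measurable_indicator[OF S]]
    by (simp add: split_beta')
  ultimately have "AE v in lborel. (\<integral>\<^sup>+ x. indicator S (x(k := v)) \<partial>lebPi k) = 0"
    by (simp add: nn_integral_0_iff_AE)
  then show ?thesis
  proof (rule eventually_mono)
    fix v :: "real^'a"
    have "(\<lambda>x. indicator S (x(k := v)) :: ennreal) \<in> borel_measurable (lebPi k)"
      using measurable_compose[OF measurable_fun_upd_lebPi borel_measurable_indicator[OF S]] .
    moreover assume "(\<integral>\<^sup>+ x. indicator S (x(k := v)) \<partial>lebPi k) = 0"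
    ultimately have "AE x in lebPi k. (indicator S (x(k := v)) :: ennreal) = 0"
      by (simp add: nn_integral_0_iff_AE)
    then show "AE x in lebPi k. P (x(k := v))"
      using AE_space
      by eventually_elim (use fun_upd_in_conf_Suc in \<open>auto simp: S_def indicator_def split: if_splits\<close>)
  qed
qed

lemma borel_measurable_marginal:
  fixes m :: "'d::finite cfg \<Rightarrow> real"
  assumes "m \<in> borel_measurable (lebPi N)" "j \<le> N" "\<forall>z\<in>conf N. 0 \<le> m z"
  shows "marginal N m j \<in> borel_measurable (lebPi j)"
proof -
  have "(\<lambda>x. enn2real (marginal_nn N m j x)) \<in> borel_measurable (lebPi j)"
    using borel_measurable_marginal_nn[OF assms(1,2)] by measurable
  then show ?thesis
    using marginal_eq_enn2real[OF assms(1,2) _ assms(3)]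
      measurable_cong[of "lebPi j" "marginal N m j" "\<lambda>x. enn2real (marginal_nn N m j x)" borel]
    by simp
qed

text \<open>Integrable because the marginal has total mass at most one.\<close>

lemma integrable_times_marginal_Suc:
  fixes m :: "'d::finite cfg \<Rightarrow> real" and B :: "'d cfg \<Rightarrow> real"
  assumes m: "m \<in> borel_measurable (lebPi N)" "\<forall>z\<in>conf N. 0 \<le> m z" "(\<integral>\<^sup>+ z. ennreal (m z) \<partial>lebPi N) = 1"
    and N: "Suc k \<le> N"
    and B: "B \<in> borel_measurable (lebPi k)" "\<forall>x\<in>conf k. \<bar>B x\<bar> \<le> C"
  shows "integrable (lebPi k \<Otimes>\<^sub>M lborel) (\<lambda>z. B (fst z) * marginal N m (Suc k) ((fst z)(k := snd z)))"
proof -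
  let ?M = "marginal N m (Suc k)"
  have M_nonneg: "0 \<le> ?M (x(k := v))" if "x \<in> conf k" for x v
    using marginal_nonneg[OF m(1) N fun_upd_in_conf_Suc[OF that] m(2)] .
  have mM: "(\<lambda>z. ?M ((fst z)(k := snd z))) \<in> borel_measurable (lebPi k \<Otimes>\<^sub>M lborel)"
    using measurable_compose[OF measurable_fun_upd_pair' borel_measurable_marginal[OF m(1) N m(2)]] .
  have "(\<integral>\<^sup>+ z. ennreal (norm (B (fst z) * ?M ((fst z)(k := snd z)))) \<partial>(lebPi k \<Otimes>\<^sub>M lborel))
      \<le> (\<integral>\<^sup>+ z. ennreal \<bar>C\<bar> * ennreal (?M ((fst z)(k := snd z))) \<partial>(lebPi k \<Otimes>\<^sub>M lborel))"
  proof (rule nn_integral_mono)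
    fix z :: "'d cfg \<times> (real^'d)" assume "z \<in> space (lebPi k \<Otimes>\<^sub>M lborel)"
    then have z: "fst z \<in> conf k" by (auto simp: space_pair_measure)
    have "\<bar>B (fst z)\<bar> * ?M ((fst z)(k := snd z)) \<le> \<bar>C\<bar> * ?M ((fst z)(k := snd z))"
      using B(2) z M_nonneg[OF z] by (intro mult_right_mono) auto
    then show "ennreal (norm (B (fst z) * ?M ((fst z)(k := snd z))))
        \<le> ennreal \<bar>C\<bar> * ennreal (?M ((fst z)(k := snd z)))"
      using M_nonneg[OF z] by (simp add: abs_mult ennreal_mult[symmetric] ennreal_leI)
  qed
  also have "\<dots> = ennreal \<bar>C\<bar> * (\<integral>\<^sup>+ x. \<integral>\<^sup>+ v. ennreal (?M (x(k := v))) \<partial>lborel \<partial>lebPi k)"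
    using mM lborel.nn_integral_fst[of "\<lambda>z. ennreal (?M ((fst z)(k := snd z)))" "lebPi k"]
    by (subst nn_integral_cmult) auto
  also have "(\<integral>\<^sup>+ x. \<integral>\<^sup>+ v. ennreal (?M (x(k := v))) \<partial>lborel \<partial>lebPi k) = (\<integral>\<^sup>+ z. ennreal (?M z) \<partial>lebPi (Suc k))"
    using nn_integral_lebPi_Suc(2)[of "\<lambda>z. ennreal (?M z)" k] borel_measurable_marginal[OF m(1) N m(2)]
    by simp
  finally have "(\<integral>\<^sup>+ z. ennreal (norm (B (fst z) * ?M ((fst z)(k := snd z)))) \<partial>(lebPi k \<Otimes>\<^sub>M lborel))
      \<le> ennreal \<bar>C\<bar> * (\<integral>\<^sup>+ z. ennreal (?M z) \<partial>lebPi (Suc k))" .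
  also have "\<dots> \<le> ennreal \<bar>C\<bar> * 1"
    using nn_integral_marginal_le_1[OF m(1) N m(2,3)] by (rule mult_left_mono) simp
  also have "\<dots> < \<infinity>" by simp
  finally have "(\<integral>\<^sup>+ z. ennreal (norm (B (fst z) * ?M ((fst z)(k := snd z)))) \<partial>(lebPi k \<Otimes>\<^sub>M lborel)) < \<infinity>" .
  moreover have "(\<lambda>z. B (fst z) * ?M ((fst z)(k := snd z))) \<in> borel_measurable (lebPi k \<Otimes>\<^sub>M lborel)"
    using measurable_compose[OF measurable_fst B(1)] mM by measurable
  ultimately show ?thesis by (simp add: integrable_iff_bounded)
qed

lemma integral_le_nn_integral:
  fixes g :: "'a \<Rightarrow> real"
  assumes "integrable M g" "AE x in M. ennreal (g x) \<le> G x"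
  shows "ennreal (integral\<^sup>L M g) \<le> (\<integral>\<^sup>+ x. G x \<partial>M)"
proof -
  have "integral\<^sup>L M g \<le> integral\<^sup>L M (\<lambda>x. max 0 (g x))"
    using assms(1) by (intro integral_mono) auto
  then have "ennreal (integral\<^sup>L M g) \<le> (\<integral>\<^sup>+ x. ennreal (max 0 (g x)) \<partial>M)"
    using assms(1) by (subst nn_integral_eq_integral) (auto intro: ennreal_leI)
  also have "\<dots> \<le> (\<integral>\<^sup>+ x. G x \<partial>M)"
    using assms(2) by (intro nn_integral_mono_AE) (auto elim!: eventually_mono simp: ennreal_max_0)
  finally show ?thesis .
qed

lemma nn_integral_le_of_incseq_approx:
  assumes "\<And>l. g l \<in> borel_measurable M" "\<And>l x. x \<in> space M \<Longrightarrow> g l x \<le> g (Suc l) x"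
    and "\<And>x. x \<in> space M \<Longrightarrow> h x \<le> (SUP l. g l x)"
    and "\<And>l. (\<integral>\<^sup>+ x. g l x \<partial>M) \<le> B"
  shows "(\<integral>\<^sup>+ x. h x \<partial>M) \<le> B"
proof -
  have "(\<integral>\<^sup>+ x. h x \<partial>M) \<le> (\<integral>\<^sup>+ x. (SUP l. g l x) \<partial>M)"
    using assms(3) by (rule nn_integral_mono)
  also have "\<dots> = (SUP l. \<integral>\<^sup>+ x. g l x \<partial>M)"
    by (rule nn_integral_monotone_convergence_SUP_AE) (use assms(1,2) in \<open>auto intro: AE_I2\<close>)
  also have "\<dots> \<le> B" using assms(4) by (rule SUP_least)
  finally show ?thesis .
qed

section \<open>The variational formula for the information\<close>

text \<open>For \<open>t, b > 0\<close> the supremum over \<open>w\<close> is \<open>t a\<^sup>2 / b\<close>, attained at \<open>w = t a / b\<close>.\<close>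

definition variational_term :: "real \<Rightarrow> real \<Rightarrow> real \<Rightarrow> real \<Rightarrow> real" where
  "variational_term t w a b = 2 * w * a - w\<^sup>2 / t * b"

lemma variational_term_le:
  assumes "0 < t" "0 < b"
  shows "variational_term t w a b \<le> t * a\<^sup>2 / b"
proof -
  have "t * a\<^sup>2 / b - variational_term t w a b = (t * a - w * b)\<^sup>2 / (t * b)"
    using assms by (simp add: variational_term_def field_simps power2_eq_square)
  also have "\<dots> \<ge> 0" using assms by simp
  finally show ?thesis by simp
qed

text \<open>The nearly optimal choice \<open>w = c t a / d\<close>, with a cutoff \<open>0 \<le> c \<le> 1\<close> and a
  regularised denominator \<open>d \<ge> b\<close>, \<open>d > 0\<close>, which keeps \<open>w\<close> smooth where \<open>b\<close> vanishes.\<close>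

lemma variational_term_ge:
  assumes "0 \<le> c" "c \<le> 1" "0 < t" "0 \<le> b" "b \<le> d" "0 < d"
  shows "t * c * a\<^sup>2 / d \<le> variational_term t (c * t * a / d) a b"
proof -
  define q where "q = t * c * a\<^sup>2 / d"
  have "0 \<le> q" unfolding q_def using assms by simp
  moreover have "c * (b / d) \<le> 1"
    using assms by (intro mult_le_one) (auto simp: divide_le_eq_1)
  ultimately have "q * (c * (b / d)) \<le> q" by (metis mult_left_le)
  moreover have "variational_term t (c * t * a / d) a b = 2 * q - q * (c * (b / d))"
    unfolding q_def variational_term_def using assms by (simp add: power2_eq_square field_simps)
  ultimately show ?thesis unfolding q_def[symmetric] by linarith
qed

section \<open>Two consecutive marginals\<close>

locale consecutive_marginals =
  fixes N :: nat and m :: "'d::finite cfg \<Rightarrow> real" and \<nu> :: "real^'d \<Rightarrow> real" and k :: nat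
  assumes m_density: "smooth_pos_density N m"
    and \<nu>_density: "smooth_pos_density_Rd \<nu>"
    and smooth_marginals: "\<And>j. 1 \<le> j \<Longrightarrow> j \<le> N \<Longrightarrow> smooth_conf j (marginal N m j)"
    and k_pos: "1 \<le> k" and Suc_k_le: "Suc k \<le> N"
begin

abbreviation "M j \<equiv> marginal N m j"
abbreviation "T j \<equiv> tensor_pow \<nu> j"
abbreviation "f j \<equiv> ratio N m \<nu> j"

lemma m_measurable: "m \<in> borel_measurable (lebPi N)"
  and m_pos: "\<forall>z\<in>conf N. 0 < m z"
  and m_normalized: "(\<integral>\<^sup>+ z. ennreal (m z) \<partial>lebPi N) = 1"
  using m_density by (simp_all add: smooth_pos_density_def)

lemma m_nonneg: "\<forall>z\<in>conf N. 0 \<le> m z"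
  using m_pos by (simp add: less_imp_le)

lemma \<nu>_pos: "0 < \<nu> v"
  and \<nu>_smooth: "smooth_conf 1 (\<lambda>y::'d cfg. \<nu> (y 0))"
  using \<nu>_density by (simp_all add: smooth_pos_density_Rd_def)

lemma T_pos: "0 < T j x"
  unfolding tensor_pow_def using \<nu>_pos by (intro prod_pos) auto

lemma T_Suc_fun_upd: "T (Suc k) (x(k := v)) = T k x * \<nu> v"
proof -
  have "(\<Prod>i<k. \<nu> ((x(k := v)) i)) = (\<Prod>i<k. \<nu> (x i))" by (rule prod.cong) auto
  then show ?thesis unfolding tensor_pow_def by (simp add: lessThan_Suc mult.commute)
qed

lemma f_Suc_fun_upd: "f (Suc k) (x(k := v)) = M (Suc k) (x(k := v)) / (T k x * \<nu> v)"
  by (simp add: ratio_def T_Suc_fun_upd)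

lemma M_nonneg: "j \<le> N \<Longrightarrow> x \<in> conf j \<Longrightarrow> 0 \<le> M j x"
  using marginal_nonneg[OF m_measurable _ _ m_nonneg] by blast

lemma f_nonneg: "j \<le> N \<Longrightarrow> x \<in> conf j \<Longrightarrow> 0 \<le> f j x"
  using M_nonneg T_pos by (simp add: ratio_def less_imp_le)

lemma smooth_upto_T: "smooth_upto r j (T j)"
  by (rule smooth_upto_tensor_pow[OF \<nu>_smooth])

lemma smooth_upto_ratio:
  assumes "1 \<le> j" "j \<le> N"
  shows "smooth_upto r j (f j)"
proof -
  have inverse_T: "smooth_upto r j (\<lambda>x. 1 * (T j x + 0) powi (-1))"
    by (rule smooth_upto_compose[OF real_smooth_upto_power_int_shift smooth_upto_T]) (auto simp: T_pos)
  have "smooth_upto r j (M j)"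
    using smooth_marginals[OF assms] smooth_conf_iff_smooth_upto by blast
  from smooth_upto_mult[OF this inverse_T]
  have "smooth_upto r j (\<lambda>x. M j x * (1 * (T j x + 0) powi (-1)))" .
  then show ?thesis by (rule smooth_upto_cong) (simp add: ratio_def power_int_minus divide_inverse)
qed

lemma smooth_upto_f: "smooth_upto r k (f k)"
  and smooth_upto_f_Suc: "smooth_upto r (Suc k) (f (Suc k))"
  using smooth_upto_ratio k_pos Suc_k_le by simp_all

lemma continuous_on_T: "continuous_on (conf k) (T k)"
  and continuous_on_f: "continuous_on (conf k) (f k)"
  using smooth_upto_imp_continuous_on[OF smooth_upto_T] smooth_upto_imp_continuous_on[OF smooth_upto_f] .

lemma continuous_on_iter_partial_f:
  "set ps \<subseteq> dirs k \<Longrightarrow> continuous_on (conf k) (iter_partial ps (f k))"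
  using continuous_on_iter_partial[OF smooth_upto_f[of "length ps"]] by simp

lemma continuous_on_iter_partial_f_Suc_section:
  assumes "set ps \<subseteq> dirs k"
  shows "continuous_on (conf k) (\<lambda>x. iter_partial ps (f (Suc k)) (x(k := v)))"
  using continuous_on_iter_partial[OF smooth_upto_fun_upd[OF smooth_upto_f_Suc] assms order_refl]
  by (simp add: iter_partial_fun_upd[OF assms])

lemma AE_M_eq_integral_M_Suc: "AE x in lebPi k. M k x = (\<integral>v. M (Suc k) (x(k := v)) \<partial>lborel)"
proof -
  have "k < N" using Suc_k_le by simp
  from AE_marginal_nn_finite[OF m_measurable less_imp_le[OF this] m_normalized] AE_space
  show ?thesis
    by eventually_elim (use marginal_eq_integral_Suc[OF m_measurable \<open>k < N\<close> _ m_nonneg] in auto)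
qed

lemma AE_AE_M_Suc_pos: "AE v in lborel. AE x in lebPi k. 0 < M (Suc k) (x(k := v))"
proof (rule AE_lebPi_Suc_fun_upd)
  show "{z \<in> space (lebPi (Suc k)). \<not> 0 < M (Suc k) z} \<in> sets (lebPi (Suc k))"
    using borel_measurable_marginal[OF m_measurable Suc_k_le m_nonneg] by measurable
  show "AE z in lebPi (Suc k). 0 < M (Suc k) z"
    by (rule AE_marginal_pos[OF m_measurable Suc_k_le m_pos m_normalized])
qed

text \<open>Weakly, \<open>f k\<close> is the \<open>\<nu>\<close>-average over \<open>v\<close> of the sections \<open>\<lambda>x. f (Suc k) (x(k := v))\<close>.\<close>

lemma integral_f_eq_integral_f_Suc:
  fixes B :: "'d cfg \<Rightarrow> real"
  assumes B: "continuous_on (conf k) B" "supported_in k R B"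
  shows "(\<integral>x. B x * f k x \<partial>lebPi k) = (\<integral>v. \<nu> v * (\<integral>x. B x * f (Suc k) (x(k := v)) \<partial>lebPi k) \<partial>lborel)"
    and "integrable lborel (\<lambda>v. \<nu> v * (\<integral>x. B x * f (Suc k) (x(k := v)) \<partial>lebPi k))"
proof -
  interpret P: pair_sigma_finite "lebPi k :: 'd cfg measure" lborel
    by (rule pair_sigma_finite_lebPi_lborel)
  define g where "g z = B (fst z) / T k (fst z) * M (Suc k) ((fst z)(k := snd z))" for z
  have cBT: "continuous_on (conf k) (\<lambda>x. B x / T k x)"
    using B(1) continuous_on_T T_pos by (intro continuous_intros) (auto simp: less_imp_neq[symmetric])
  obtain C where "\<forall>x\<in>conf_cball k R. \<bar>B x / T k x\<bar> \<le> C"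
    using continuous_on_conf_bounded_on_cball[OF cBT] by blast
  then have "\<forall>x\<in>conf k. \<bar>B x / T k x\<bar> \<le> \<bar>C\<bar>"
    using B(2) by (force simp: supported_in_def)
  then have g: "integrable (lebPi k \<Otimes>\<^sub>M lborel) g"
    unfolding g_def using borel_measurable_continuous_on_conf[OF cBT]
    by (intro integrable_times_marginal_Suc[OF m_measurable m_nonneg m_normalized Suc_k_le])
  then have g: "integrable (lebPi k \<Otimes>\<^sub>M lborel) (\<lambda>(x, v). g (x, v))"
    by simp
  have section_eq: "(\<integral>x. g (x, v) \<partial>lebPi k) = \<nu> v * (\<integral>x. B x * f (Suc k) (x(k := v)) \<partial>lebPi k)" for v
  proof -
    have "g (x, v) = \<nu> v * (B x * f (Suc k) (x(k := v)))" for x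
      using T_pos[of k x] \<nu>_pos[of v] unfolding g_def f_Suc_fun_upd by (simp add: field_simps)
    then show ?thesis by simp
  qed
  have "(\<integral>x. B x * f k x \<partial>lebPi k) = (\<integral>x. (\<integral>v. g (x, v) \<partial>lborel) \<partial>lebPi k)"
  proof (rule integral_cong_AE)
    show "(\<lambda>x. B x * f k x) \<in> borel_measurable (lebPi k)"
      by (intro borel_measurable_continuous_on_conf continuous_on_mult B(1) continuous_on_f)
    show "(\<lambda>x. \<integral>v. g (x, v) \<partial>lborel) \<in> borel_measurable (lebPi k)"
      using lborel.borel_measurable_lebesgue_integral[of "\<lambda>x v. g (x, v)"] integrable_iff_bounded g
      by simp
    show "AE x in lebPi k. B x * f k x = (\<integral>v. g (x, v) \<partial>lborel)"
      using AE_M_eq_integral_M_Suc by eventually_elim (simp add: g_def ratio_def)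
  qed
  also have "\<dots> = (\<integral>v. (\<integral>x. g (x, v) \<partial>lebPi k) \<partial>lborel)"
    by (rule P.Fubini_integral[OF g, symmetric])
  finally show "(\<integral>x. B x * f k x \<partial>lebPi k) = (\<integral>v. \<nu> v * (\<integral>x. B x * f (Suc k) (x(k := v)) \<partial>lebPi k) \<partial>lborel)"
    by (simp only: section_eq)
  show "integrable lborel (\<lambda>v. \<nu> v * (\<integral>x. B x * f (Suc k) (x(k := v)) \<partial>lebPi k))"
    using P.integrable_snd[OF g] by (simp only: section_eq)
qed

text \<open>Integration by parts moves the derivatives from \<open>f k\<close> onto \<open>w\<close>, where the weak identity
  above applies, and back onto the sections of \<open>f (Suc k)\<close>.\<close>

lemma integral_iter_partial_f_eq:
  fixes w :: "'d cfg \<Rightarrow> real"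
  assumes w: "smooth_upto (length ps) k w" "supported_in k R w" and ps: "set ps \<subseteq> dirs k"
  shows "(\<integral>x. w x * iter_partial ps (f k) x \<partial>lebPi k)
      = (\<integral>v. \<nu> v * (\<integral>x. w x * iter_partial ps (f (Suc k)) (x(k := v)) \<partial>lebPi k) \<partial>lborel)"
    and "integrable lborel (\<lambda>v. \<nu> v * (\<integral>x. w x * iter_partial ps (f (Suc k)) (x(k := v)) \<partial>lebPi k))"
proof -
  define A where "A = iter_partial (rev ps) w"
  let ?s = "(-1) ^ length ps :: real"
  have A: "continuous_on (conf k) A" "supported_in k R A"
    unfolding A_def using continuous_on_iter_partial[OF w(1)] supported_in_iter_partial[of "rev ps" k w R]
      w ps by simp_all
  have by_parts_Suc_k: "(\<integral>x. w x * iter_partial ps (f (Suc k)) (x(k := v)) \<partial>lebPi k)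
      = ?s * (\<integral>x. A x * f (Suc k) (x(k := v)) \<partial>lebPi k)" for v
    using integral_by_parts_iter_partial[OF ps smooth_upto_fun_upd[OF smooth_upto_f_Suc] w]
    unfolding A_def by (simp add: iter_partial_fun_upd[OF ps])
  have "(\<integral>x. w x * iter_partial ps (f k) x \<partial>lebPi k) = ?s * (\<integral>x. A x * f k x \<partial>lebPi k)"
    unfolding A_def by (rule integral_by_parts_iter_partial[OF ps smooth_upto_f w])
  also have "\<dots> = ?s * (\<integral>v. \<nu> v * (\<integral>x. A x * f (Suc k) (x(k := v)) \<partial>lebPi k) \<partial>lborel)"
    by (simp only: integral_f_eq_integral_f_Suc(1)[OF A])
  also have "\<dots> = (\<integral>v. ?s * (\<nu> v * (\<integral>x. A x * f (Suc k) (x(k := v)) \<partial>lebPi k)) \<partial>lborel)"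
    by simp
  also have "\<dots> = (\<integral>v. \<nu> v * (\<integral>x. w x * iter_partial ps (f (Suc k)) (x(k := v)) \<partial>lebPi k) \<partial>lborel)"
    by (simp only: by_parts_Suc_k mult.left_commute)
  finally show "(\<integral>x. w x * iter_partial ps (f k) x \<partial>lebPi k)
      = (\<integral>v. \<nu> v * (\<integral>x. w x * iter_partial ps (f (Suc k)) (x(k := v)) \<partial>lebPi k) \<partial>lborel)" .
  show "integrable lborel (\<lambda>v. \<nu> v * (\<integral>x. w x * iter_partial ps (f (Suc k)) (x(k := v)) \<partial>lebPi k))"
    using integrable_mult_right[OF integral_f_eq_integral_f_Suc(2)[OF A], of ?s]
    by (simp add: by_parts_Suc_k mult.left_commute)
qed

lemma integral_variational_term_eq:
  fixes w :: "'d cfg \<Rightarrow> real"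
  assumes w: "smooth_upto (length ps) k w" "supported_in k R w" and ps: "set ps \<subseteq> dirs k"
  defines "\<Psi> v \<equiv> (\<integral>x. variational_term (T k x) (w x) (iter_partial ps (f (Suc k)) (x(k := v)))
      (f (Suc k) (x(k := v))) \<partial>lebPi k)"
  shows "(\<integral>x. variational_term (T k x) (w x) (iter_partial ps (f k) x) (f k x) \<partial>lebPi k)
      = (\<integral>v. \<nu> v * \<Psi> v \<partial>lborel)"
    and "integrable lborel (\<lambda>v. \<nu> v * \<Psi> v)"
proof -
  define W where "W x = (w x)\<^sup>2 / T k x" for x
  define IW where "IW v = (\<integral>x. W x * f (Suc k) (x(k := v)) \<partial>lebPi k)" for v
  define Iw where "Iw v = (\<integral>x. w x * iter_partial ps (f (Suc k)) (x(k := v)) \<partial>lebPi k)" for v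
  have cw: "continuous_on (conf k) w" using smooth_upto_imp_continuous_on[OF w(1)] .
  have W: "continuous_on (conf k) W" "supported_in k R W"
    unfolding W_def using cw continuous_on_T T_pos w(2)
    by (auto intro!: continuous_intros simp: less_imp_neq[symmetric] supported_in_def)
  have "integrable (lebPi k) (\<lambda>x. w x * iter_partial ps (f (Suc k)) (x(k := v)))"
    "integrable (lebPi k) (\<lambda>x. W x * f (Suc k) (x(k := v)))" for v
    using supported_in_mult[OF w(2)] supported_in_mult[OF W(2)]
      continuous_on_iter_partial_f_Suc_section[of "[]"]
    by (auto intro!: integrable_supported continuous_on_mult cw W(1)
        continuous_on_iter_partial_f_Suc_section[OF ps])
  then have \<Psi>_eq: "\<Psi> v = 2 * Iw v - IW v" for v
    by (simp add: \<Psi>_def Iw_def IW_def W_def variational_term_def mult.assoc)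
  have "integrable (lebPi k) (\<lambda>x. w x * iter_partial ps (f k) x)"
    "integrable (lebPi k) (\<lambda>x. W x * f k x)"
    using supported_in_mult[OF w(2)] supported_in_mult[OF W(2)]
    by (auto intro!: integrable_supported continuous_on_mult cw W(1) continuous_on_f
        continuous_on_iter_partial_f[OF ps])
  then have "(\<integral>x. variational_term (T k x) (w x) (iter_partial ps (f k) x) (f k x) \<partial>lebPi k)
      = 2 * (\<integral>x. w x * iter_partial ps (f k) x \<partial>lebPi k) - (\<integral>x. W x * f k x \<partial>lebPi k)"
    by (simp add: variational_term_def W_def mult.assoc)
  also have "\<dots> = (\<integral>v. 2 * (\<nu> v * Iw v) - \<nu> v * IW v \<partial>lborel)"
    using integral_iter_partial_f_eq[OF w ps] integral_f_eq_integral_f_Suc[OF W]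
    by (simp add: Iw_def IW_def)
  also have "\<dots> = (\<integral>v. \<nu> v * \<Psi> v \<partial>lborel)"
    by (simp only: \<Psi>_eq right_diff_distrib mult.left_commute)
  finally show "(\<integral>x. variational_term (T k x) (w x) (iter_partial ps (f k) x) (f k x) \<partial>lebPi k)
      = (\<integral>v. \<nu> v * \<Psi> v \<partial>lborel)" .
  show "integrable lborel (\<lambda>v. \<nu> v * \<Psi> v)"
    unfolding \<Psi>_eq right_diff_distrib mult.left_commute[of "\<nu> _" 2]
    using integral_iter_partial_f_eq(2)[OF w ps] integral_f_eq_integral_f_Suc(2)[OF W]
    by (simp add: Iw_def IW_def)
qed

lemma borel_measurable_info_integrand_Suc:
  "(\<lambda>z. T (Suc k) z * dnorm2 (Suc k) j (f (Suc k)) z / f (Suc k) z) \<in> borel_measurable (lebPi (Suc k))"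
proof -
  have "continuous_on (conf (Suc k)) (dnorm2 (Suc k) j (f (Suc k)))"
    unfolding dnorm2_def
    by (intro continuous_on_sum continuous_on_power continuous_on_iter_partial[OF smooth_upto_f_Suc])
      auto
  moreover have "continuous_on (conf (Suc k)) (T (Suc k))" "continuous_on (conf (Suc k)) (f (Suc k))"
    using smooth_upto_imp_continuous_on[OF smooth_upto_T] smooth_upto_imp_continuous_on[OF smooth_upto_f_Suc]
    by blast+
  ultimately show ?thesis
    by (intro borel_measurable_divide borel_measurable_times borel_measurable_continuous_on_conf)
qed

lemma info_Suc_eq_iterated:
  "info N m \<nu> j (Suc k) = (\<integral>\<^sup>+ v. \<integral>\<^sup>+ x. ennreal (T (Suc k) (x(k := v)) *
      dnorm2 (Suc k) j (f (Suc k)) (x(k := v)) / f (Suc k) (x(k := v))) \<partial>lebPi k \<partial>lborel)"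
  unfolding info_def
  using nn_integral_lebPi_Suc(1)[OF measurable_compose[OF borel_measurable_info_integrand_Suc measurable_ennreal]]
  by simp

text \<open>The only loss: the derivatives in the directions of the added particle are dropped.\<close>

lemma sum_variational_term_section_le:
  fixes w :: "(nat \<times> 'd) list \<Rightarrow> 'd cfg \<Rightarrow> real"
  assumes "0 < M (Suc k) (x(k := v))"
  shows "(\<Sum>ps\<in>{ps. set ps \<subseteq> dirs k \<and> length ps = j}. \<nu> v * variational_term (T k x) (w ps x)
      (iter_partial ps (f (Suc k)) (x(k := v))) (f (Suc k) (x(k := v))))
    \<le> T (Suc k) (x(k := v)) * dnorm2 (Suc k) j (f (Suc k)) (x(k := v)) / f (Suc k) (x(k := v))"
    (is "?lhs \<le> _")
proof -
  let ?L = "{ps. set ps \<subseteq> dirs k \<and> length ps = j}"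
  let ?L' = "{ps. set ps \<subseteq> dirs (Suc k) \<and> length ps = j}"
  let ?a = "\<lambda>ps. iter_partial ps (f (Suc k)) (x(k := v))" and ?b = "f (Suc k) (x(k := v))"
  have "0 < T k x" "0 < \<nu> v" by (simp_all add: T_pos \<nu>_pos)
  moreover from this have "0 < ?b" using assms by (simp add: f_Suc_fun_upd)
  ultimately have "?lhs \<le> (\<Sum>ps\<in>?L. \<nu> v * (T k x * (?a ps)\<^sup>2 / ?b))"
    by (intro sum_mono mult_left_mono variational_term_le) auto
  also have "\<dots> = \<nu> v * T k x / ?b * (\<Sum>ps\<in>?L. (?a ps)\<^sup>2)"
    by (simp add: sum_distrib_left mult.assoc)
  also have "\<dots> \<le> \<nu> v * T k x / ?b * (\<Sum>ps\<in>?L'. (?a ps)\<^sup>2)"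
    using \<open>0 < T k x\<close> \<open>0 < \<nu> v\<close> \<open>0 < ?b\<close>
    by (intro mult_left_mono sum_mono2 finite_dir_lists) (auto simp: dirs_def)
  also have "\<dots> = T (Suc k) (x(k := v)) * dnorm2 (Suc k) j (f (Suc k)) (x(k := v)) / ?b"
    unfolding dnorm2_def T_Suc_fun_upd by (simp add: mult.commute)
  finally show ?thesis .
qed

lemma integrable_variational_term_section:
  fixes w :: "'d cfg \<Rightarrow> real"
  assumes "smooth_upto r k w" "supported_in k R w" "set ps \<subseteq> dirs k"
  shows "integrable (lebPi k) (\<lambda>x. variational_term (T k x) (w x)
    (iter_partial ps (f (Suc k)) (x(k := v))) (f (Suc k) (x(k := v))))"
proof (rule integrable_supported)
  show "continuous_on (conf k) (\<lambda>x. variational_term (T k x) (w x)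
      (iter_partial ps (f (Suc k)) (x(k := v))) (f (Suc k) (x(k := v))))"
    unfolding variational_term_def
    using smooth_upto_imp_continuous_on[OF assms(1)] assms(3) continuous_on_T T_pos
      continuous_on_iter_partial_f_Suc_section continuous_on_iter_partial_f_Suc_section[of "[]"]
    by (intro continuous_intros) (auto simp: less_imp_neq[symmetric])
  show "supported_in k R (\<lambda>x. variational_term (T k x) (w x)
      (iter_partial ps (f (Suc k)) (x(k := v))) (f (Suc k) (x(k := v))))"
    using assms(2) by (simp add: supported_in_def variational_term_def)
qed

lemma variational_section_sum_le:
  fixes j :: nat and w :: "(nat \<times> 'd) list \<Rightarrow> 'd cfg \<Rightarrow> real"
  defines "L \<equiv> {ps. set ps \<subseteq> dirs k \<and> length ps = j}"
  assumes pos: "AE x in lebPi k. 0 < M (Suc k) (x(k := v))"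
    and integrable: "\<And>ps. ps \<in> L \<Longrightarrow> integrable (lebPi k) (\<lambda>x. variational_term (T k x) (w ps x)
      (iter_partial ps (f (Suc k)) (x(k := v))) (f (Suc k) (x(k := v))))"
  shows "ennreal (\<Sum>ps\<in>L. \<nu> v * (\<integral>x. variational_term (T k x) (w ps x)
      (iter_partial ps (f (Suc k)) (x(k := v))) (f (Suc k) (x(k := v))) \<partial>lebPi k))
    \<le> (\<integral>\<^sup>+ x. ennreal (T (Suc k) (x(k := v)) * dnorm2 (Suc k) j (f (Suc k)) (x(k := v)) /
      f (Suc k) (x(k := v))) \<partial>lebPi k)"
proof -
  let ?V = "\<lambda>ps x. variational_term (T k x) (w ps x) (iter_partial ps (f (Suc k)) (x(k := v)))
      (f (Suc k) (x(k := v)))"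
  have "finite L" unfolding L_def by (rule finite_dir_lists)
  have sum_eq: "(\<Sum>ps\<in>L. \<nu> v * (\<integral>x. ?V ps x \<partial>lebPi k)) = (\<integral>x. (\<Sum>ps\<in>L. \<nu> v * ?V ps x) \<partial>lebPi k)"
    using integrable by (subst Bochner_Integration.integral_sum) auto
  have "ennreal (\<integral>x. (\<Sum>ps\<in>L. \<nu> v * ?V ps x) \<partial>lebPi k)
    \<le> (\<integral>\<^sup>+ x. ennreal (T (Suc k) (x(k := v)) * dnorm2 (Suc k) j (f (Suc k)) (x(k := v)) /
      f (Suc k) (x(k := v))) \<partial>lebPi k)"
  proof (rule integral_le_nn_integral)
    show "integrable (lebPi k) (\<lambda>x. \<Sum>ps\<in>L. \<nu> v * ?V ps x)"
      using integrable by (intro Bochner_Integration.integrable_sum integrable_mult_right) auto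
    show "AE x in lebPi k. ennreal (\<Sum>ps\<in>L. \<nu> v * ?V ps x)
      \<le> ennreal (T (Suc k) (x(k := v)) * dnorm2 (Suc k) j (f (Suc k)) (x(k := v)) / f (Suc k) (x(k := v)))"
      using pos by eventually_elim (unfold L_def, intro ennreal_leI sum_variational_term_section_le)
  qed
  then show ?thesis by (simp only: sum_eq)
qed

lemma variational_sum_le_info_Suc:
  fixes j :: nat and w :: "(nat \<times> 'd) list \<Rightarrow> 'd cfg \<Rightarrow> real"
  defines "L \<equiv> {ps. set ps \<subseteq> dirs k \<and> length ps = j}"
  assumes w: "\<And>ps. ps \<in> L \<Longrightarrow> smooth_upto j k (w ps)" "\<And>ps. ps \<in> L \<Longrightarrow> supported_in k R (w ps)"
  shows "ennreal (\<Sum>ps\<in>L. \<integral>x. variational_term (T k x) (w ps x) (iter_partial ps (f k) x) (f k x) \<partial>lebPi k)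
    \<le> info N m \<nu> j (Suc k)"
proof -
  define \<Psi> where "\<Psi> ps v = (\<integral>x. variational_term (T k x) (w ps x)
      (iter_partial ps (f (Suc k)) (x(k := v))) (f (Suc k) (x(k := v))) \<partial>lebPi k)" for ps v
  have w': "smooth_upto (length ps) k (w ps)" "supported_in k R (w ps)" "set ps \<subseteq> dirs k"
    if "ps \<in> L" for ps
    using w that by (auto simp: L_def)
  have integrable: "integrable lborel (\<lambda>v. \<nu> v * \<Psi> ps v)" if "ps \<in> L" for ps
    unfolding \<Psi>_def by (rule integral_variational_term_eq(2)[OF w'[OF that]])
  have "(\<Sum>ps\<in>L. \<integral>x. variational_term (T k x) (w ps x) (iter_partial ps (f k) x) (f k x) \<partial>lebPi k)
      = (\<Sum>ps\<in>L. \<integral>v. \<nu> v * \<Psi> ps v \<partial>lborel)"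
    unfolding \<Psi>_def by (intro sum.cong refl integral_variational_term_eq(1)[OF w'])
  also have "\<dots> = (\<integral>v. (\<Sum>ps\<in>L. \<nu> v * \<Psi> ps v) \<partial>lborel)"
    by (rule Bochner_Integration.integral_sum[symmetric]) (rule integrable)
  finally have sum_eq: "(\<Sum>ps\<in>L. \<integral>x. variational_term (T k x) (w ps x) (iter_partial ps (f k) x) (f k x)
      \<partial>lebPi k) = (\<integral>v. (\<Sum>ps\<in>L. \<nu> v * \<Psi> ps v) \<partial>lborel)" .
  have "AE v in lborel. ennreal (\<Sum>ps\<in>L. \<nu> v * \<Psi> ps v) \<le> (\<integral>\<^sup>+ x. ennreal (T (Suc k) (x(k := v)) *
      dnorm2 (Suc k) j (f (Suc k)) (x(k := v)) / f (Suc k) (x(k := v))) \<partial>lebPi k)"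
    using AE_AE_M_Suc_pos
  proof (rule eventually_mono)
    fix v assume "AE x in lebPi k. 0 < M (Suc k) (x(k := v))"
    then show "ennreal (\<Sum>ps\<in>L. \<nu> v * \<Psi> ps v) \<le> (\<integral>\<^sup>+ x. ennreal (T (Suc k) (x(k := v)) *
        dnorm2 (Suc k) j (f (Suc k)) (x(k := v)) / f (Suc k) (x(k := v))) \<partial>lebPi k)"
      unfolding \<Psi>_def L_def
    proof (rule variational_section_sum_le)
      fix ps :: "(nat \<times> 'd) list" assume "ps \<in> {ps. set ps \<subseteq> dirs k \<and> length ps = j}"
      then have "ps \<in> L" by (simp add: L_def)
      then show "integrable (lebPi k) (\<lambda>x. variational_term (T k x) (w ps x)
          (iter_partial ps (f (Suc k)) (x(k := v))) (f (Suc k) (x(k := v))))"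
        by (intro integrable_variational_term_section[OF w'])
    qed
  qed
  then have "ennreal (\<integral>v. (\<Sum>ps\<in>L. \<nu> v * \<Psi> ps v) \<partial>lborel) \<le> info N m \<nu> j (Suc k)"
    unfolding info_Suc_eq_iterated
    by (intro integral_le_nn_integral Bochner_Integration.integrable_sum integrable)
  then show ?thesis by (simp only: sum_eq)
qed

text \<open>Nearly optimal test functions for the variational formula at level \<open>k\<close>: the optimal
  \<open>T a / f\<close>, cut off outside the box of radius \<open>l + 1\<close> and regularised by \<open>1 / (l + 1)\<close>.\<close>

definition test_function :: "nat \<Rightarrow> nat \<Rightarrow> (nat \<times> 'd) list \<Rightarrow> 'd cfg \<Rightarrow> real" where
  "test_function j l ps x =
     cutoff (j + 2) k l x * T k x * iter_partial ps (f k) x / (f k x + inverse (real (Suc l)))"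

definition truncated_integrand :: "nat \<Rightarrow> nat \<Rightarrow> 'd cfg \<Rightarrow> real" where
  "truncated_integrand j l x =
     T k x * cutoff (j + 2) k l x * dnorm2 k j (f k) x / (f k x + inverse (real (Suc l)))"

lemma regularised_f_pos: "x \<in> conf k \<Longrightarrow> 0 < f k x + inverse (real (Suc l))"
  using f_nonneg[of k x] Suc_k_le by (simp add: add_nonneg_pos)

lemma smooth_upto_test_function:
  assumes "set ps \<subseteq> dirs k"
  shows "smooth_upto j k (test_function j l ps)"
proof -
  have "f k x \<in> {y. - inverse (real (Suc l)) < y}" if "x \<in> conf k" for x
    using regularised_f_pos[OF that, of l] by auto
  then have inverse: "smooth_upto j k (\<lambda>x. 1 * (f k x + inverse (real (Suc l))) powi (-1))"
    by (intro smooth_upto_compose[OF real_smooth_upto_power_int_shift smooth_upto_f] ballI)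
  have "smooth_upto j k (iter_partial ps (f k))"
    using smooth_upto_iter_partial[OF smooth_upto_f assms] .
  from smooth_upto_mult[OF smooth_upto_mult[OF smooth_upto_mult[OF
        smooth_upto_cutoff[of j "j + 2" k l] smooth_upto_T] this] inverse]
  have "smooth_upto j k (\<lambda>x. cutoff (j + 2) k l x * T k x * iter_partial ps (f k) x *
      (1 * (f k x + inverse (real (Suc l))) powi (-1)))"
    by simp
  then show ?thesis
    unfolding test_function_def by (rule smooth_upto_cong) (simp add: power_int_minus divide_inverse)
qed

lemma supported_in_test_function: "supported_in k (real (Suc l)) (test_function j l ps)"
  using supported_in_cutoff[of "j + 2" k l] unfolding test_function_def by (auto simp: supported_in_def)

lemma truncated_integrand_le_variational_sum:
  assumes "x \<in> conf k"
  shows "truncated_integrand j l x \<le> (\<Sum>ps\<in>{ps. set ps \<subseteq> dirs k \<and> length ps = j}.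
    variational_term (T k x) (test_function j l ps x) (iter_partial ps (f k) x) (f k x))"
proof -
  let ?d = "f k x + inverse (real (Suc l))" and ?c = "cutoff (j + 2) k l x"
  have "truncated_integrand j l x
      = (\<Sum>ps\<in>{ps. set ps \<subseteq> dirs k \<and> length ps = j}. T k x * ?c * (iter_partial ps (f k) x)\<^sup>2 / ?d)"
    unfolding truncated_integrand_def dnorm2_def by (simp add: sum_distrib_left sum_divide_distrib)
  also have "\<dots> \<le> (\<Sum>ps\<in>{ps. set ps \<subseteq> dirs k \<and> length ps = j}.
      variational_term (T k x) (test_function j l ps x) (iter_partial ps (f k) x) (f k x))"
    unfolding test_function_def
    using cutoff_bounds[of "j + 2" k l x] T_pos[of k x] f_nonneg[OF _ assms] Suc_k_le
      regularised_f_pos[OF assms]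
    by (intro sum_mono variational_term_ge) auto
  finally show ?thesis .
qed

lemma truncated_integrand_nonneg: "x \<in> conf k \<Longrightarrow> 0 \<le> truncated_integrand j l x"
  unfolding truncated_integrand_def dnorm2_def
  by (intro divide_nonneg_pos mult_nonneg_nonneg sum_nonneg regularised_f_pos)
    (auto simp: T_pos cutoff_bounds less_imp_le)

lemma continuous_on_truncated_integrand: "continuous_on (conf k) (truncated_integrand j l)"
proof -
  have "continuous_on (conf k) (dnorm2 k j (f k))"
    unfolding dnorm2_def
    by (intro continuous_on_sum continuous_on_power continuous_on_iter_partial_f) auto
  moreover have "continuous_on (conf k) (cutoff (j + 2) k l)"
    using smooth_upto_imp_continuous_on[OF smooth_upto_cutoff[of 0 "j + 2" k l]] by simp
  ultimately show ?thesis
    unfolding truncated_integrand_def using continuous_on_T continuous_on_f regularised_f_pos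
    by (intro continuous_intros) (auto simp: less_imp_neq[symmetric])
qed

lemma nn_integral_truncated_integrand_le_info_Suc:
  "(\<integral>\<^sup>+ x. ennreal (truncated_integrand j l x) \<partial>lebPi k) \<le> info N m \<nu> j (Suc k)"
proof -
  let ?L = "{ps. set ps \<subseteq> dirs k \<and> length ps = j}"
  let ?V = "\<lambda>ps x. variational_term (T k x) (test_function j l ps x) (iter_partial ps (f k) x) (f k x)"
  have supported: "supported_in k (real (Suc l)) (truncated_integrand j l)"
    using supported_in_cutoff[of "j + 2" k l] by (auto simp: supported_in_def truncated_integrand_def)
  have integrable_V: "integrable (lebPi k) (?V ps)" if "ps \<in> ?L" for ps
  proof (rule integrable_supported)
    show "continuous_on (conf k) (?V ps)"
      unfolding variational_term_def
      using smooth_upto_imp_continuous_on[OF smooth_upto_test_function] that continuous_on_T T_pos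
        continuous_on_f continuous_on_iter_partial_f
      by (intro continuous_intros) (auto simp: less_imp_neq[symmetric])
    show "supported_in k (real (Suc l)) (?V ps)"
      using supported_in_test_function[where j = j and l = l and ps = ps]
      by (auto simp: supported_in_def variational_term_def)
  qed
  have "(\<integral>\<^sup>+ x. ennreal (truncated_integrand j l x) \<partial>lebPi k) = ennreal (\<integral>x. truncated_integrand j l x \<partial>lebPi k)"
    using truncated_integrand_nonneg
    by (intro nn_integral_eq_integral integrable_supported[OF continuous_on_truncated_integrand supported]
        AE_I2) simp
  also have "\<dots> \<le> ennreal (\<integral>x. (\<Sum>ps\<in>?L. ?V ps x) \<partial>lebPi k)"
    using truncated_integrand_le_variational_sum integrable_V
    by (intro ennreal_leI integral_mono integrable_supported[OF continuous_on_truncated_integrand supported]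
        Bochner_Integration.integrable_sum) auto
  also have "\<dots> = ennreal (\<Sum>ps\<in>?L. \<integral>x. ?V ps x \<partial>lebPi k)"
    using integrable_V by (subst Bochner_Integration.integral_sum) auto
  also have "\<dots> \<le> info N m \<nu> j (Suc k)"
    using smooth_upto_test_function supported_in_test_function
    by (intro variational_sum_le_info_Suc) auto
  finally show ?thesis .
qed

lemma truncated_integrand_mono:
  assumes "x \<in> conf k"
  shows "truncated_integrand j l x \<le> truncated_integrand j (Suc l) x"
proof -
  have "cutoff (j + 2) k l x / (f k x + inverse (real (Suc l)))
      \<le> cutoff (j + 2) k (Suc l) x / (f k x + inverse (real (Suc (Suc l))))"
    using cutoff_bounds[of "j + 2" k "Suc l" x] cutoff_mono[of l "Suc l" "j + 2" k x]
      regularised_f_pos[OF assms, of "Suc l"]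
    by (intro frac_le) (auto simp: le_imp_inverse_le)
  moreover have "0 \<le> T k x * dnorm2 k j (f k) x"
    unfolding dnorm2_def by (intro mult_nonneg_nonneg sum_nonneg) (auto simp: T_pos less_imp_le)
  ultimately show ?thesis
    unfolding truncated_integrand_def using mult_left_mono by (fastforce simp: mult_ac)
qed

lemma truncated_integrand_tendsto:
  assumes "0 < f k x"
  shows "(\<lambda>l. truncated_integrand j l x) \<longlonglongrightarrow> T k x * dnorm2 k j (f k) x / f k x"
proof -
  have "(\<lambda>l. T k x * cutoff (j + 2) k l x * dnorm2 k j (f k) x / (f k x + inverse (real (Suc l))))
      \<longlonglongrightarrow> T k x * 1 * dnorm2 k j (f k) x / (f k x + 0)"
    using cutoff_tendsto_1 LIMSEQ_inverse_real_of_nat assms by (intro tendsto_intros) auto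
  then show ?thesis unfolding truncated_integrand_def by simp
qed

lemma info_le_info_Suc: "info N m \<nu> j k \<le> info N m \<nu> j (Suc k)"
  unfolding info_def[of _ _ _ _ k]
proof (rule nn_integral_le_of_incseq_approx[where g = "\<lambda>l x. ennreal (truncated_integrand j l x)"])
  show "(\<lambda>x. ennreal (truncated_integrand j l x)) \<in> borel_measurable (lebPi k)" for l
    using borel_measurable_continuous_on_conf[OF continuous_on_truncated_integrand] by measurable
  show "ennreal (truncated_integrand j l x) \<le> ennreal (truncated_integrand j (Suc l) x)"
    if "x \<in> space (lebPi k)" for l x
    using truncated_integrand_mono that by (simp add: ennreal_leI)
  show "(\<integral>\<^sup>+ x. ennreal (truncated_integrand j l x) \<partial>lebPi k) \<le> info N m \<nu> j (Suc k)" for l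
    by (rule nn_integral_truncated_integrand_le_info_Suc)
  fix x :: "'d cfg" assume "x \<in> space (lebPi k)"
  then have "0 \<le> f k x" using f_nonneg Suc_k_le by simp
  text \<open>Where \<open>f k\<close> vanishes the integrand is \<open>0\<close>, since division by zero yields zero.\<close>
  show "ennreal (T k x * dnorm2 k j (f k) x / f k x) \<le> (SUP l. ennreal (truncated_integrand j l x))"
  proof (cases "f k x = 0")
    case False
    with \<open>0 \<le> f k x\<close> have "(\<lambda>l. ennreal (truncated_integrand j l x))
        \<longlonglongrightarrow> ennreal (T k x * dnorm2 k j (f k) x / f k x)"
      by (intro tendsto_ennrealI truncated_integrand_tendsto) simp
    then show ?thesis
      by (rule LIMSEQ_le_const2) (intro exI[of _ 0] allI impI SUP_upper, simp)
  qed simp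
qed

end

theorem mainTheorem6:
  fixes N :: nat and m :: "'d::finite cfg \<Rightarrow> real" and \<nu> :: "real^'d \<Rightarrow> real"
  assumes "smooth_pos_density N m"
    and "smooth_pos_density_Rd \<nu>"
    and "\<And>k. 1 \<le> k \<Longrightarrow> k \<le> N \<Longrightarrow> smooth_conf k (marginal N m k)"
    and "1 \<le> k" and "k \<le> N - 1"
  shows "info N m \<nu> 1 k \<le> info N m \<nu> 1 (k + 1) \<and>
         info N m \<nu> 2 k \<le> info N m \<nu> 2 (k + 1) \<and>
         info N m \<nu> 3 k \<le> info N m \<nu> 3 (k + 1)"
proof -
  interpret consecutive_marginals N m \<nu> k
    using assms by unfold_locales auto
  show ?thesis using info_le_info_Suc by simp
qed

end
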